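(* Assume $n$ is sufficiently large and $2\le r<\sqrt[5]{\ln n}$. Let $H=(V,E)$ be an $n$-uniform hypergraph, let $1\le k\le i\le r$, and let $H'=(C_1,\dots,C_k)$ be an ordered $k$-tuple of edges of $H$. If the weights $\sigma(v)$, $v\in V$, are independent and uniformly distributed on $[0,1)$, then the probability that $H'$ is an ordered $k$-chain for color $i$ is at most $$2\left(\frac{\ln n}{n}\right)^{\frac{k(r-1)}{r}}r^{-(n-1)k-1}.$$
   Context: Setting: $H=(V,E)$ an $n$-uniform hypergraph, colors $\{1,\dots,r\}$. Put $p=\frac{r-1}{r}\cdot\frac{\ln(n/\ln n)}{n}$. Partition $[0,1)$ into consecutive half-open intervals $\Delta_1,\delta_1,\dots,\delta_{r-1},\Delta_r$ (left to right), $\Delta_i=\big[(i-1)(\tfrac{1-p}{r}+\tfrac{p}{r-1}),\ i\tfrac{1-p}{r}+(i-1)\tfrac{p}{r-1}\big)$, $\delta_i=\big[i\tfrac{1-p}{r}+(i-1)\tfrac{p}{r-1},\ i(\tfrac{1-p}{r}+\tfrac{p}{r-1})\big)$. For injective $\sigma:V\to[0,1)$ (which holds almost surely), a vertex $v$ belongs to interval $I$ if $\sigma(v)\in I$; the first (last) vertex of a vertex set is its vertex of smallest (largest) weight. Algorithm 1: every vertex in $\Delta_i$ gets color $i$; then vertices in $\bigcup_i\delta_i$ are processed in increasing weight order, and $v\in\delta_i$ gets color $i$ unless some edge containing $v$ has all its other vertices already colored $i$, in which case $v$ gets color $i+1$; the result is $C^0$. A sequence $(C_1,\dots,C_k)$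 of edges is an ordered $k$-chain for color $i$ ($1\le k\le i\le r$) if: (a) the first vertex of $C_1$ lies in $\Delta_{i-k+1}$; (b) for each $j=1,\dots,k-1$, the last vertex of $C_j$ equals the first vertex of $C_{j+1}$, lies in $\delta_{i-k+j}$, and all other vertices of $C_j$ have color $i-k+j$ in $C^0$; (c) all vertices of $C_k$ have color $i$ in $C^0$. *)

theory Defs
  imports "HOL-Probability.Probability"
begin

definition pp :: "nat \<Rightarrow> nat \<Rightarrow> real" where
  "pp n r = (real r - 1) / real r * (ln (real n / ln (real n)) / real n)"

definition DeltaI :: "nat \<Rightarrow> nat \<Rightarrow> nat \<Rightarrow> real set" where
  "DeltaI n r i = {(real i - 1) * ((1 - pp n r) / real r + pp n r / (real r - 1)) ..<
                   real i * ((1 - pp n r) / real r) + (real i - 1) * (pp n r / (real r - 1))}"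

definition deltaI :: "nat \<Rightarrow> nat \<Rightarrow> nat \<Rightarrow> real set" where
  "deltaI n r i = {real i * ((1 - pp n r) / real r) + (real i - 1) * (pp n r / (real r - 1)) ..<
                   real i * ((1 - pp n r) / real r + pp n r / (real r - 1))}"

text \<open>Characterisation of the colouring C^0 produced by Algorithm 1 for weights sigma.
  A vertex u is already coloured when v is processed iff u lies in some Delta_j, or u lies
  in some delta_j and has smaller weight than v.\<close>
definition alg1_ok :: "nat \<Rightarrow> nat \<Rightarrow> nat set \<Rightarrow> nat set set \<Rightarrow> (nat \<Rightarrow> real) \<Rightarrow> (nat \<Rightarrow> nat) \<Rightarrow> bool" where
  "alg1_ok n r V E \<sigma> c \<longleftrightarrow>
     (\<forall>v. v \<notin> V \<longrightarrow> c v = 0) \<and>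
     (\<forall>v\<in>V. \<sigma> v \<notin> {0..<1} \<longrightarrow> c v = 0) \<and>
     (\<forall>v\<in>V. \<forall>i\<in>{1..r}. \<sigma> v \<in> DeltaI n r i \<longrightarrow> c v = i) \<and>
     (\<forall>v\<in>V. \<forall>i\<in>{1..<r}. \<sigma> v \<in> deltaI n r i \<longrightarrow>
        c v = (if (\<exists>e\<in>E. v \<in> e \<and>
                    (\<forall>u\<in>e - {v}.
                       (\<sigma> u \<in> (\<Union>j\<in>{1..r}. DeltaI n r j) \<or>
                        (\<sigma> u \<in> (\<Union>j\<in>{1..<r}. deltaI n r j) \<and> \<sigma> u < \<sigma> v))
                       \<and> c u = i))
               then i + 1 else i))"

definition alg1_color :: "nat \<Rightarrow> nat \<Rightarrow> nat set \<Rightarrow> nat set set \<Rightarrow> (nat \<Rightarrow> real) \<Rightarrow> nat \<Rightarrow> nat" where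
  "alg1_color n r V E \<sigma> = (THE c. alg1_ok n r V E \<sigma> c)"

definition first_v :: "(nat \<Rightarrow> real) \<Rightarrow> nat set \<Rightarrow> nat" where
  "first_v \<sigma> C = arg_min_on \<sigma> C"

definition last_v :: "(nat \<Rightarrow> real) \<Rightarrow> nat set \<Rightarrow> nat" where
  "last_v \<sigma> C = arg_max_on \<sigma> C"

definition ordered_chain ::
  "nat \<Rightarrow> nat \<Rightarrow> nat set \<Rightarrow> nat set set \<Rightarrow> nat \<Rightarrow> nat \<Rightarrow> (nat \<Rightarrow> nat set) \<Rightarrow> (nat \<Rightarrow> real) \<Rightarrow> bool" where
  "ordered_chain n r V E k i C \<sigma> \<longleftrightarrow>
     \<sigma> (first_v \<sigma> (C 1)) \<in> DeltaI n r (i - k + 1) \<and>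
     (\<forall>j\<in>{1..<k}.
        last_v \<sigma> (C j) = first_v \<sigma> (C (Suc j)) \<and>
        \<sigma> (last_v \<sigma> (C j)) \<in> deltaI n r (i - k + j) \<and>
        (\<forall>u\<in>C j - {last_v \<sigma> (C j)}. alg1_color n r V E \<sigma> u = i - k + j)) \<and>
     (\<forall>u\<in>C k. alg1_color n r V E \<sigma> u = i)"

definition weight_space :: "nat set \<Rightarrow> (nat \<Rightarrow> real) measure" where
  "weight_space V = PiM V (\<lambda>_. uniform_measure lborel {0..<1})"

end

theory Submission
  imports Defs "HOL-Real_Asymp.Real_Asymp"
begin

text \<open>Let \<alpha> = (1 - p) / r and \<beta> = p / (r - 1) be the lengths of the intervals Delta_j and
  delta_j. In an ordered k-chain the last vertex of C_j, its j-th link, lies in delta_(i-k+j);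
  consecutive edges meet exactly in their link and all other pairs of edges are disjoint. Every
  vertex of C_j has weight between the links j - 1 and j, and if the weights are distinct, the last
  vertex of C_k cannot lie in delta_i, since it would have received colour i + 1.
  Splitting each delta interval into n parts of length \<beta> / n and taking a union bound over the
  n^(k-1) possible positions of the links covers the event by boxes. In a box, the d_j non-link
  vertices of C_j, (n - 2) k + 2 in total, have weights in an interval of length w_j between \<alpha> and
  \<alpha> + 2 \<beta>, and the w_j sum to about k \<alpha> + (k - 1) \<beta>. Writing w_j = (1 + y_j) / r and using
  1 + y \<le> exp y bounds the probability by (r \<beta>)^(k-1) r^(-(n-1)k-1) exp ((n - 2) \<Sum> y_j + O (r \<beta>)),
  which the choice of p turns into the claimed bound.
  The event is measurable because it only depends on which intervals contain the weights and on
  their relative order.\<close>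

section \<open>The intervals\<close>

definition Delta_len :: "nat \<Rightarrow> nat \<Rightarrow> real" where
  "Delta_len n r = (1 - pp n r) / real r"

definition delta_len :: "nat \<Rightarrow> nat \<Rightarrow> real" where
  "delta_len n r = pp n r / (real r - 1)"

definition block_len :: "nat \<Rightarrow> nat \<Rightarrow> real" where
  "block_len n r = Delta_len n r + delta_len n r"

lemma DeltaI_eq:
  "DeltaI n r j = {(real j - 1) * block_len n r ..< (real j - 1) * block_len n r + Delta_len n r}"
proof -
  have "real j * Delta_len n r + (real j - 1) * delta_len n r
      = (real j - 1) * block_len n r + Delta_len n r"
    by (simp add: block_len_def algebra_simps)
  then show ?thesis
    unfolding DeltaI_def by (simp add: Delta_len_def delta_len_def block_len_def)
qed

lemma deltaI_eq:
  "deltaI n r j = {(real j - 1) * block_len n r + Delta_len n r ..< real j * block_len n r}"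
proof -
  have "real j * Delta_len n r + (real j - 1) * delta_len n r
      = (real j - 1) * block_len n r + Delta_len n r"
    by (simp add: block_len_def algebra_simps)
  then show ?thesis
    unfolding deltaI_def by (simp add: Delta_len_def delta_len_def block_len_def)
qed

definition Delta_index :: "nat \<Rightarrow> nat \<Rightarrow> real \<Rightarrow> nat" where
  "Delta_index n r x = (THE j. j \<in> {1..r} \<and> x \<in> DeltaI n r j)"

definition delta_index :: "nat \<Rightarrow> nat \<Rightarrow> real \<Rightarrow> nat" where
  "delta_index n r x = (THE j. j \<in> {1..<r} \<and> x \<in> deltaI n r j)"

locale interval_params =
  fixes n r :: nat
  assumes r_ge_2: "2 \<le> r" and pp_pos: "0 < pp n r" and pp_less_1: "pp n r < 1"
begin

abbreviation "\<alpha> \<equiv> Delta_len n r"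
abbreviation "\<beta> \<equiv> delta_len n r"
abbreviation "s \<equiv> block_len n r"

lemma Delta_len_pos: "0 < \<alpha>"
  using pp_less_1 r_ge_2 by (simp add: Delta_len_def)

lemma delta_len_pos: "0 < \<beta>"
  using pp_pos r_ge_2 by (simp add: delta_len_def)

lemma block_len_pos: "0 < s"
  using Delta_len_pos delta_len_pos by (simp add: block_len_def)

lemma blocks_fill_unit: "(real r - 1) * s + \<alpha> = 1"
  using r_ge_2 by (simp add: block_len_def Delta_len_def delta_len_def field_simps)

lemma DeltaI_in_block: "x \<in> DeltaI n r j \<Longrightarrow> (real j - 1) * s \<le> x \<and> x < real j * s"
  using delta_len_pos by (auto simp: DeltaI_eq block_len_def algebra_simps)

lemma deltaI_in_block: "x \<in> deltaI n r j \<Longrightarrow> (real j - 1) * s \<le> x \<and> x < real j * s"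
  using Delta_len_pos by (auto simp: deltaI_eq algebra_simps)

lemma block_index_unique:
  assumes "(real j - 1) * s \<le> x" "x < real j * s" "(real j' - 1) * s \<le> x" "x < real j' * s"
  shows "j = j'"
proof -
  have "real j - 1 < real j'" "real j' - 1 < real j"
    using assms block_len_pos mult_less_cancel_right_pos[of s] by (meson le_less_trans)+
  then show ?thesis by linarith
qed

lemma DeltaI_index_unique: "x \<in> DeltaI n r j \<Longrightarrow> x \<in> DeltaI n r j' \<Longrightarrow> j = j'"
  using DeltaI_in_block block_index_unique by blast

lemma deltaI_index_unique: "x \<in> deltaI n r j \<Longrightarrow> x \<in> deltaI n r j' \<Longrightarrow> j = j'"
  using deltaI_in_block block_index_unique by blast

lemma DeltaI_deltaI_disjoint: "x \<in> DeltaI n r j \<Longrightarrow> x \<notin> deltaI n r j'"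
proof
  assume "x \<in> DeltaI n r j" "x \<in> deltaI n r j'"
  moreover from this have "j = j'"
    using DeltaI_in_block deltaI_in_block block_index_unique by blast
  ultimately show False by (simp add: DeltaI_eq deltaI_eq)
qed

lemma DeltaI_subset_unit: "j \<in> {1..r} \<Longrightarrow> DeltaI n r j \<subseteq> {0..<1}"
proof
  fix x assume j: "j \<in> {1..r}" and x: "x \<in> DeltaI n r j"
  have "0 \<le> (real j - 1) * s" "(real j - 1) * s \<le> (real r - 1) * s"
    using j block_len_pos by (auto intro!: mult_right_mono)
  then show "x \<in> {0..<1}"
    using x blocks_fill_unit unfolding DeltaI_eq atLeastLessThan_iff by linarith
qed

lemma deltaI_subset_unit: "j \<in> {1..<r} \<Longrightarrow> deltaI n r j \<subseteq> {0..<1}"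
proof
  fix x assume j: "j \<in> {1..<r}" and x: "x \<in> deltaI n r j"
  have "0 \<le> (real j - 1) * s" "real j * s \<le> (real r - 1) * s"
    using j block_len_pos by (auto intro!: mult_right_mono)
  then show "x \<in> {0..<1}"
    using x Delta_len_pos blocks_fill_unit unfolding deltaI_eq atLeastLessThan_iff by linarith
qed

lemma unit_interval_covered:
  assumes x: "x \<in> {0..<1}"
  shows "(\<exists>j\<in>{1..r}. x \<in> DeltaI n r j) \<or> (\<exists>j\<in>{1..<r}. x \<in> deltaI n r j)"
proof -
  define j where "j = nat \<lfloor>x / s\<rfloor> + 1"
  have j: "real j - 1 = of_int \<lfloor>x / s\<rfloor>"
    using x block_len_pos by (simp add: j_def)
  have lo: "(real j - 1) * s \<le> x"
    using j block_len_pos by (simp add: pos_le_divide_eq[symmetric])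
  have "x / s < real j"
    using j by linarith
  then have hi: "x < real j * s"
    using block_len_pos by (simp add: pos_divide_less_eq)
  have "real r * s \<le> (real j - 1) * s" if "r < j"
    using that block_len_pos by (intro mult_right_mono) auto
  then have "j \<le> r"
    using lo x blocks_fill_unit delta_len_pos by (force simp: block_len_def algebra_simps)
  moreover have "1 \<le> j"
    by (simp add: j_def)
  moreover have "j \<noteq> r" if "(real j - 1) * s + \<alpha> \<le> x"
    using that x blocks_fill_unit by auto
  ultimately show ?thesis
    using lo hi by (cases "x < (real j - 1) * s + \<alpha>") (auto simp: DeltaI_eq deltaI_eq)
qed

lemma Delta_index_eq: "j \<in> {1..r} \<Longrightarrow> x \<in> DeltaI n r j \<Longrightarrow> Delta_index n r x = j"
  unfolding Delta_index_def using DeltaI_index_unique by blast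

lemma delta_index_eq: "j \<in> {1..<r} \<Longrightarrow> x \<in> deltaI n r j \<Longrightarrow> delta_index n r x = j"
  unfolding delta_index_def using deltaI_index_unique by blast

end

section \<open>Algorithm 1 defines a unique colouring\<close>

lemma adm_wf_unique_fixpoint:
  assumes wf: "wf R" and adm: "adm_wf R F"
  shows "\<exists>!c. c = F c"
proof
  show "wfrec R F = F (wfrec R F)"
    by (rule wfrec_fixpoint[OF wf adm])
  fix c assume c: "c = F c"
  show "c = wfrec R F"
  proof
    fix x show "c x = wfrec R F x"
      using wf
    proof induct
      case (less x)
      have "c x = F c x"
        using c by (rule fun_cong)
      also have "\<dots> = F (wfrec R F) x"
        by (rule adm[unfolded adm_wf_def, rule_format]) (use less in blast)
      also have "\<dots> = wfrec R F x"
        by (rule fun_cong[OF wfrec_fixpoint[OF wf adm], symmetric])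
      finally show ?case .
    qed
  qed
qed

definition processed_before :: "nat \<Rightarrow> nat \<Rightarrow> (nat \<Rightarrow> real) \<Rightarrow> nat \<Rightarrow> nat \<Rightarrow> bool" where
  "processed_before n r \<sigma> u v \<longleftrightarrow>
     \<sigma> u \<in> (\<Union>j\<in>{1..r}. DeltaI n r j) \<or> (\<sigma> u \<in> (\<Union>j\<in>{1..<r}. deltaI n r j) \<and> \<sigma> u < \<sigma> v)"

definition blocked ::
  "nat \<Rightarrow> nat \<Rightarrow> nat set set \<Rightarrow> (nat \<Rightarrow> real) \<Rightarrow> (nat \<Rightarrow> nat) \<Rightarrow> nat \<Rightarrow> nat \<Rightarrow> bool" where
  "blocked n r E \<sigma> c v i \<longleftrightarrow> (\<exists>e\<in>E. v \<in> e \<and> (\<forall>u\<in>e - {v}. processed_before n r \<sigma> u v \<and> c u = i))"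

lemma alg1_ok_iff:
  "alg1_ok n r V E \<sigma> c \<longleftrightarrow>
     (\<forall>v. v \<notin> V \<longrightarrow> c v = 0) \<and>
     (\<forall>v\<in>V. \<sigma> v \<notin> {0..<1} \<longrightarrow> c v = 0) \<and>
     (\<forall>v\<in>V. \<forall>i\<in>{1..r}. \<sigma> v \<in> DeltaI n r i \<longrightarrow> c v = i) \<and>
     (\<forall>v\<in>V. \<forall>i\<in>{1..<r}. \<sigma> v \<in> deltaI n r i \<longrightarrow>
        c v = (if blocked n r E \<sigma> c v i then i + 1 else i))"
  unfolding alg1_ok_def blocked_def processed_before_def ..

lemma blocked_cong:
  assumes "E \<subseteq> Pow V" and "\<And>u. u \<in> V \<Longrightarrow> processed_before n r \<sigma> u v \<Longrightarrow> c u = c' u"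
  shows "blocked n r E \<sigma> c v i = blocked n r E \<sigma> c' v i"
proof -
  have "processed_before n r \<sigma> u v \<and> c u = i \<longleftrightarrow> processed_before n r \<sigma> u v \<and> c' u = i"
    if "e \<in> E" "u \<in> e" for e u
  proof -
    have "u \<in> V"
      using assms(1) that by auto
    then show ?thesis
      using assms(2)[of u] by auto
  qed
  then show ?thesis
    unfolding blocked_def by blast
qed

text \<open>Algorithm 1 as a well-founded recursion: \<open>alg1_step\<close> only consults the colours of the
  predecessors of a vertex in \<open>processing_order\<close>, so \<open>alg1_ok\<close> has exactly one solution.\<close>

definition alg1_step ::
  "nat \<Rightarrow> nat \<Rightarrow> nat set \<Rightarrow> nat set set \<Rightarrow> (nat \<Rightarrow> real) \<Rightarrow> (nat \<Rightarrow> nat) \<Rightarrow> nat \<Rightarrow> nat" where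
  "alg1_step n r V E \<sigma> c v =
     (if v \<notin> V \<or> \<sigma> v \<notin> {0..<1} then 0
      else if \<sigma> v \<in> (\<Union>j\<in>{1..r}. DeltaI n r j) then Delta_index n r (\<sigma> v)
      else if blocked n r E \<sigma> c v (delta_index n r (\<sigma> v)) then delta_index n r (\<sigma> v) + 1
      else delta_index n r (\<sigma> v))"

definition processing_order :: "nat \<Rightarrow> nat \<Rightarrow> nat set \<Rightarrow> (nat \<Rightarrow> real) \<Rightarrow> (nat \<times> nat) set" where
  "processing_order n r V \<sigma> =
     {(u, v). u \<in> V \<and> \<sigma> v \<notin> (\<Union>j\<in>{1..r}. DeltaI n r j) \<and> processed_before n r \<sigma> u v}"

lemma wf_processing_order:
  assumes "finite V"
  shows "wf (processing_order n r V \<sigma>)"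
proof -
  let ?D = "\<Union>j\<in>{1..r}. DeltaI n r j"
  define below where "below v = card {w\<in>V. \<sigma> w < \<sigma> v}" for v
  define rank where "rank v = (if \<sigma> v \<in> ?D then 0 else card V + 1) + below v" for v
  have below_le: "below v \<le> card V" for v
    unfolding below_def using assms by (intro card_mono) auto
  have below_mono: "below u < below v" if "u \<in> V" "\<sigma> u < \<sigma> v" for u v
    unfolding below_def using assms that by (intro psubset_card_mono) auto
  have "rank u < rank v" if "(u, v) \<in> processing_order n r V \<sigma>" for u v
  proof -
    have u: "u \<in> V" "processed_before n r \<sigma> u v" and v: "\<sigma> v \<notin> ?D"
      using that by (auto simp: processing_order_def)
    show ?thesis
    proof (cases "\<sigma> u \<in> ?D")
      case True
      then show ?thesis
        using v below_le[of u] by (simp add: rank_def)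
    next
      case False
      then have "\<sigma> u < \<sigma> v"
        using u(2) by (simp add: processed_before_def)
      then show ?thesis
        using False v below_mono[OF u(1)] by (simp add: rank_def)
    qed
  qed
  then show ?thesis
    by (intro wf_subset[OF wf_measure[of rank]]) auto
qed

lemma adm_wf_alg1_step:
  assumes "E \<subseteq> Pow V"
  shows "adm_wf (processing_order n r V \<sigma>) (alg1_step n r V E \<sigma>)"
  unfolding adm_wf_def
proof (intro allI impI)
  fix c c' :: "nat \<Rightarrow> nat" and v
  assume "\<forall>u. (u, v) \<in> processing_order n r V \<sigma> \<longrightarrow> c u = c' u"
  then have "\<sigma> v \<notin> (\<Union>j\<in>{1..r}. DeltaI n r j) \<Longrightarrow> blocked n r E \<sigma> c v i = blocked n r E \<sigma> c' v i" for i
    using assms by (intro blocked_cong) (auto simp: processing_order_def)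
  then show "alg1_step n r V E \<sigma> c v = alg1_step n r V E \<sigma> c' v"
    unfolding alg1_step_def by presburger
qed

context interval_params
begin

lemma alg1_step_if_alg1_ok:
  assumes ok: "alg1_ok n r V E \<sigma> c"
  shows "alg1_step n r V E \<sigma> c v = c v"
proof (cases "v \<in> V \<and> \<sigma> v \<in> {0..<1}")
  case False
  then show ?thesis
    using ok by (auto simp: alg1_ok_iff alg1_step_def)
next
  case True
  then consider (Delta) j where "j \<in> {1..r}" "\<sigma> v \<in> DeltaI n r j"
    | (delta) j where "j \<in> {1..<r}" "\<sigma> v \<in> deltaI n r j" "\<sigma> v \<notin> (\<Union>j\<in>{1..r}. DeltaI n r j)"
    using unit_interval_covered DeltaI_deltaI_disjoint by blast
  then show ?thesis
  proof cases
    case Delta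
    then show ?thesis
      using True ok by (auto simp: alg1_ok_iff alg1_step_def Delta_index_eq)
  next
    case delta
    then show ?thesis
      using True ok by (auto simp: alg1_ok_iff alg1_step_def delta_index_eq)
  qed
qed

lemma alg1_ok_if_fixpoint:
  assumes c: "\<And>v. c v = alg1_step n r V E \<sigma> c v"
  shows "alg1_ok n r V E \<sigma> c"
  unfolding alg1_ok_iff
proof (intro conjI allI ballI impI)
  show "c v = 0" if "v \<notin> V" for v
    using c[of v] that by (simp add: alg1_step_def)
  show "c v = 0" if "v \<in> V" "\<sigma> v \<notin> {0..<1}" for v
    using c[of v] that by (simp add: alg1_step_def)
  show "c v = i" if "v \<in> V" "i \<in> {1..r}" "\<sigma> v \<in> DeltaI n r i" for v i
  proof -
    have "\<sigma> v \<in> {0..<1}" "\<sigma> v \<in> (\<Union>j\<in>{1..r}. DeltaI n r j)"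
      using that DeltaI_subset_unit by blast+
    then show ?thesis
      using c[of v] that Delta_index_eq by (simp add: alg1_step_def)
  qed
  show "c v = (if blocked n r E \<sigma> c v i then i + 1 else i)"
    if "v \<in> V" "i \<in> {1..<r}" "\<sigma> v \<in> deltaI n r i" for v i
  proof -
    have "\<sigma> v \<in> {0..<1}" "\<sigma> v \<notin> (\<Union>j\<in>{1..r}. DeltaI n r j)"
      using that deltaI_subset_unit DeltaI_deltaI_disjoint by blast+
    then show ?thesis
      using c[of v] that delta_index_eq by (simp add: alg1_step_def)
  qed
qed

lemma alg1_ok_iff_fixpoint: "alg1_ok n r V E \<sigma> c \<longleftrightarrow> c = alg1_step n r V E \<sigma> c"
  using alg1_step_if_alg1_ok[of V E \<sigma> c] alg1_ok_if_fixpoint[of c V E \<sigma>] by (metis ext)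

lemma alg1_color_ok:
  assumes "finite V" "E \<subseteq> Pow V"
  shows "alg1_ok n r V E \<sigma> (alg1_color n r V E \<sigma>)"
proof -
  have "\<exists>!c. c = alg1_step n r V E \<sigma> c"
    by (rule adm_wf_unique_fixpoint[OF wf_processing_order[OF assms(1)] adm_wf_alg1_step[OF assms(2)]])
  then have "\<exists>!c. alg1_ok n r V E \<sigma> c"
    by (simp only: alg1_ok_iff_fixpoint)
  then show ?thesis
    unfolding alg1_color_def by (rule theI')
qed

lemma alg1_color_location:
  assumes "finite V" "E \<subseteq> Pow V" "v \<in> V" "alg1_color n r V E \<sigma> v = i" "1 \<le> i"
  shows "\<sigma> v \<in> {0..<1} \<and> (\<sigma> v < (real i - 1) * s + \<alpha> \<or> (i < r \<and> \<sigma> v \<in> deltaI n r i))"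
proof -
  note ok = alg1_color_ok[OF assms(1,2), of \<sigma>, unfolded alg1_ok_iff]
  have unit: "\<sigma> v \<in> {0..<1}"
    using ok assms(3-5) by auto
  then consider (Delta) j where "j \<in> {1..r}" "\<sigma> v \<in> DeltaI n r j"
    | (delta) j where "j \<in> {1..<r}" "\<sigma> v \<in> deltaI n r j"
    using unit_interval_covered by blast
  then show ?thesis
  proof cases
    case Delta
    then show ?thesis
      using ok assms(3,4) unit by (auto simp: DeltaI_eq)
  next
    case delta
    then have "i = j \<or> i = j + 1"
      using ok assms(3,4) by (auto split: if_splits)
    moreover have "\<sigma> v < real j * s"
      using delta by (simp add: deltaI_eq)
    ultimately show ?thesis
      using delta unit Delta_len_pos by auto
  qed
qed

lemma alg1_color_bumped:
  assumes "finite V" "E \<subseteq> Pow V" "v \<in> V" "i \<in> {1..<r}" "\<sigma> v \<in> deltaI n r i"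
    and "e \<in> E" "v \<in> e"
    and "\<And>u. u \<in> e - {v} \<Longrightarrow> alg1_color n r V E \<sigma> u = i \<and> \<sigma> u \<in> {0..<1} \<and> \<sigma> u < \<sigma> v"
  shows "alg1_color n r V E \<sigma> v = i + 1"
proof -
  have "processed_before n r \<sigma> u v \<and> alg1_color n r V E \<sigma> u = i" if "u \<in> e - {v}" for u
  proof -
    have u: "alg1_color n r V E \<sigma> u = i" "\<sigma> u \<in> {0..<1}" "\<sigma> u < \<sigma> v"
      using assms(8)[OF that] by auto
    then have "\<sigma> u \<in> (\<Union>j\<in>{1..r}. DeltaI n r j) \<or> \<sigma> u \<in> (\<Union>j\<in>{1..<r}. deltaI n r j)"
      using unit_interval_covered by blast
    then show ?thesis
      using u by (auto simp: processed_before_def)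
  qed
  then have "blocked n r E \<sigma> (alg1_color n r V E \<sigma>) v i"
    unfolding blocked_def using assms(6,7) by blast
  then show ?thesis
    using alg1_color_ok[OF assms(1,2)] assms(3-5) by (simp add: alg1_ok_iff)
qed

end

section \<open>The weight space\<close>

abbreviation unif :: "real measure" where
  "unif \<equiv> uniform_measure lborel {0..<1}"

lemma prob_space_unif: "prob_space unif"
  by (rule prob_space_uniform_measure) auto

lemma prob_space_weight_space: "prob_space (weight_space V)"
  unfolding weight_space_def by (rule prob_space_PiM) (rule prob_space_unif)

lemma space_weight_space: "space (weight_space V) = PiE V (\<lambda>_. UNIV)"
  by (simp add: weight_space_def space_PiM)

lemma measurable_weight_space_component [measurable]:
  "v \<in> V \<Longrightarrow> (\<lambda>\<sigma>. \<sigma> v) \<in> borel_measurable (weight_space V)"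
  unfolding weight_space_def using measurable_component_singleton[of v V "\<lambda>_. unif"]
  by (simp add: measurable_def)

lemma measure_weight_space_PiE:
  assumes "finite V" "\<And>v. v \<in> V \<Longrightarrow> A v \<in> sets borel"
  shows "measure (weight_space V) (PiE V A) = (\<Prod>v\<in>V. measure unif (A v))"
proof -
  interpret U: prob_space unif
    by (rule prob_space_unif)
  interpret product_prob_space "\<lambda>_. unif" V
    by (intro product_prob_space.intro product_sigma_finite.intro product_prob_space_axioms.intro
        prob_space_imp_sigma_finite prob_space_unif)
  have "emeasure (weight_space V) (PiE V A) = (\<Prod>v\<in>V. emeasure unif (A v))"
    unfolding weight_space_def using assms by (intro emeasure_PiM) simp_all
  also have "\<dots> = ennreal (\<Prod>v\<in>V. measure unif (A v))"
    by (simp add: U.emeasure_eq_measure prod_ennreal)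
  finally show ?thesis
    by (simp add: measure_def prod_nonneg)
qed

lemma measure_unif_le_length:
  assumes "X \<in> sets borel" "X \<subseteq> {a..b}" "a \<le> b"
  shows "measure unif X \<le> b - a"
proof -
  interpret U: prob_space unif
    by (rule prob_space_unif)
  have "emeasure unif X = emeasure lborel ({0..<1} \<inter> X)"
    using assms by (subst emeasure_uniform_measure) (simp_all add: divide_ennreal_def)
  also have "\<dots> \<le> emeasure lborel {a..b}"
    using assms by (intro emeasure_mono) auto
  finally show ?thesis
    using assms by (simp add: U.emeasure_eq_measure)
qed

lemma measure_unif_outside_unit: "measure unif (- {0..<1}) = 0"
  by (simp add: measure_def)

lemma prod_le_prod_subset:
  fixes f :: "'a \<Rightarrow> real"
  assumes "finite V" "W \<subseteq> V" "\<And>v. v \<in> V \<Longrightarrow> 0 \<le> f v \<and> f v \<le> 1"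
  shows "prod f V \<le> prod f W"
proof -
  have "prod f V = prod f W * prod f (V - W)"
    using assms by (metis prod.subset_diff mult.commute)
  also have "\<dots> \<le> prod f W"
    using assms by (intro mult_left_le prod_le_1 prod_nonneg) auto
  finally show ?thesis .
qed

lemma grid_index:
  fixes L w x :: real
  assumes "0 < w" "0 < N" "L \<le> x" "x < L + w"
  shows "\<exists>q<N. L + real q * w / N \<le> x \<and> x < L + (real q + 1) * w / N"
proof -
  define z where "z = (x - L) * N / w"
  define q where "q = nat \<lfloor>z\<rfloor>"
  have "(x - L) * N < N * w"
    using assms by (simp add: mult.commute)
  then have "0 \<le> z" "z < N"
    using assms by (simp_all add: z_def pos_divide_less_eq)
  then have q: "real q \<le> z" "z < real q + 1" "q < N"
    unfolding q_def by linarith+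
  moreover have "L + real q * w / N \<le> x" "x < L + (real q + 1) * w / N"
    using q(1,2) assms(1,2) by (simp_all add: z_def field_simps)
  ultimately show ?thesis
    by blast
qed

lemma measure_weight_space_pair_box:
  assumes "finite V" "u \<in> V" "w \<in> V" "u \<noteq> w" "I \<in> sets borel"
  shows "measure (weight_space V) (PiE V (\<lambda>v. if v = u \<or> v = w then I else UNIV)) \<le> measure unif I ^ 2"
proof -
  let ?f = "\<lambda>v. measure unif (if v = u \<or> v = w then I else UNIV)"
  have "measure (weight_space V) (PiE V (\<lambda>v. if v = u \<or> v = w then I else UNIV)) = prod ?f V"
    using assms(1,5) by (subst measure_weight_space_PiE) auto
  also have "\<dots> \<le> prod ?f {u, w}"
    using assms(1-3) prob_space.prob_le_1[OF prob_space_unif] by (intro prod_le_prod_subset) auto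
  also have "\<dots> = measure unif I ^ 2"
    using assms(4) by (simp add: power2_eq_square)
  finally show ?thesis .
qed

lemma measure_weight_space_ties_le:
  assumes "finite V" "u \<in> V" "w \<in> V" "u \<noteq> w" "0 < N"
  shows "measure (weight_space V) {\<sigma> \<in> space (weight_space V). \<sigma> u = \<sigma> w} \<le> 1 / real N"
proof -
  let ?M = "weight_space V"
  interpret prob_space ?M
    by (rule prob_space_weight_space)
  define I where "I q = {real q / N ..< (real q + 1) / N}" for q :: nat
  define G where "G q = PiE V (\<lambda>v. if v = u \<or> v = w then I q else UNIV)" for q
  define Out where "Out = PiE V (\<lambda>v. if v = u then - {0..<1} else (UNIV :: real set))"
  have sets: "G q \<in> sets ?M" "Out \<in> sets ?M" for q
    unfolding G_def Out_def I_def weight_space_def using assms(1) by (auto intro!: sets_PiM_I_finite)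
  have "{\<sigma> \<in> space ?M. \<sigma> u = \<sigma> w} \<subseteq> Out \<union> (\<Union>q<N. G q)"
  proof
    fix \<sigma> assume \<sigma>: "\<sigma> \<in> {\<sigma> \<in> space ?M. \<sigma> u = \<sigma> w}"
    show "\<sigma> \<in> Out \<union> (\<Union>q<N. G q)"
    proof (cases "\<sigma> u \<in> {0..<1}")
      case False
      then show ?thesis
        using \<sigma> by (auto simp: Out_def space_weight_space PiE_iff)
    next
      case True
      then obtain q where "q < N" "\<sigma> u \<in> I q"
        using grid_index[of 1 N 0 "\<sigma> u"] assms(5) by (auto simp: I_def)
      then show ?thesis
        using \<sigma> by (auto simp: G_def space_weight_space PiE_iff)
    qed
  qed
  then have "measure ?M {\<sigma> \<in> space ?M. \<sigma> u = \<sigma> w} \<le> measure ?M (Out \<union> (\<Union>q<N. G q))"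
    using sets by (intro finite_measure_mono) auto
  also have "\<dots> \<le> measure ?M Out + (\<Sum>q<N. measure ?M (G q))"
    using sets by (intro order.trans[OF measure_Un_le] add_left_mono measure_UNION_le) auto
  also have "measure ?M Out = 0"
    unfolding Out_def using assms measure_unif_outside_unit
    by (subst measure_weight_space_PiE) (auto intro!: prod_zero)
  also have "measure ?M (G q) \<le> (1 / N) ^ 2" for q
  proof -
    have "measure unif (I q) \<le> (real q + 1) / N - real q / N"
      using assms(5) by (intro measure_unif_le_length) (auto simp: I_def divide_right_mono)
    then have "measure unif (I q) \<le> 1 / N"
      by (simp add: add_divide_distrib)
    then show ?thesis
      unfolding G_def using measure_weight_space_pair_box[OF assms(1-4), of "I q"]
      by (auto simp: I_def intro: order.trans power_mono)
  qed
  then have "(\<Sum>q<N. measure ?M (G q)) \<le> 1 / N"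
    using sum_mono[of "{..<N}" "\<lambda>q. measure ?M (G q)" "\<lambda>_. (1 / N) ^ 2"] assms(5)
    by (simp add: power2_eq_square)
  finally show ?thesis
    by simp
qed

lemma weight_space_ties_null:
  assumes "finite V" "u \<in> V" "w \<in> V" "u \<noteq> w"
  shows "{\<sigma> \<in> space (weight_space V). \<sigma> u = \<sigma> w} \<in> null_sets (weight_space V)"
proof -
  let ?M = "weight_space V" and ?T = "{\<sigma> \<in> space (weight_space V). \<sigma> u = \<sigma> w}"
  interpret prob_space ?M
    by (rule prob_space_weight_space)
  have "measure ?M ?T \<le> 0 + e" if "0 < e" for e
  proof -
    obtain N :: nat where "0 < N" "inverse (real N) < e"
      using ex_inverse_of_nat_less \<open>0 < e\<close> by blast
    then show ?thesis
      using measure_weight_space_ties_le[OF assms, of N] by (simp add: inverse_eq_divide)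
  qed
  then have "measure ?M ?T = 0"
    by (meson field_le_epsilon measure_nonneg order.antisym)
  moreover have "?T \<in> sets ?M"
    using assms(2,3) by measurable
  ultimately show ?thesis
    by (simp add: emeasure_eq_measure null_setsI)
qed

lemma weight_space_not_inj_null:
  assumes "finite V" "S \<subseteq> V"
  shows "{\<sigma> \<in> space (weight_space V). \<not> inj_on \<sigma> S} \<in> null_sets (weight_space V)"
proof -
  let ?P = "{p \<in> S \<times> S. fst p \<noteq> snd p}"
  have "{\<sigma> \<in> space (weight_space V). \<not> inj_on \<sigma> S}
      = (\<Union>p\<in>?P. {\<sigma> \<in> space (weight_space V). \<sigma> (fst p) = \<sigma> (snd p)})"
    unfolding inj_on_def by fastforce
  also have "\<dots> \<in> null_sets (weight_space V)"
  proof (rule null_sets_UN')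
    have "finite (S \<times> S)"
      using assms finite_subset by blast
    then show "countable ?P"
      by (intro countable_finite) (simp add: finite_subset[of ?P "S \<times> S"] subset_iff)
    show "{\<sigma> \<in> space (weight_space V). \<sigma> (fst p) = \<sigma> (snd p)} \<in> null_sets (weight_space V)"
      if "p \<in> ?P" for p
      using that assms(2) by (intro weight_space_ties_null[OF assms(1)]) auto
  qed
  finally show ?thesis .
qed

section \<open>Events determined by the order pattern of the weights\<close>

definition same_pattern :: "nat set \<Rightarrow> real set set \<Rightarrow> (nat \<Rightarrow> real) \<Rightarrow> (nat \<Rightarrow> real) \<Rightarrow> bool" where
  "same_pattern V T \<sigma> \<sigma>' \<longleftrightarrow>
     (\<forall>v\<in>V. \<forall>t\<in>T. \<sigma> v \<in> t \<longleftrightarrow> \<sigma>' v \<in> t) \<and> (\<forall>u\<in>V. \<forall>v\<in>V. \<sigma> u < \<sigma> v \<longleftrightarrow> \<sigma>' u < \<sigma>' v)"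

lemma Collect_prod_eq_iff:
  "{(a, b) \<in> A \<times> B. P a b} = {(a, b) \<in> A \<times> B. Q a b} \<longleftrightarrow> (\<forall>a\<in>A. \<forall>b\<in>B. P a b \<longleftrightarrow> Q a b)"
  by (auto simp: set_eq_iff)

lemma pred_same_pattern:
  assumes "finite T" "T \<subseteq> sets borel"
  shows "Measurable.pred (weight_space V) (\<lambda>\<sigma>. same_pattern V T \<sigma>0 \<sigma>)"
proof -
  have const: "Measurable.pred (weight_space V) (\<lambda>_. b)" for b
    by (cases b) simp_all
  have mem: "Measurable.pred (weight_space V) (\<lambda>\<sigma>. \<sigma> v \<in> t)" if "v \<in> V" "t \<in> T" for v t
    using that assms(2) by (intro pred_sets2[OF _ measurable_weight_space_component]) auto
  show ?thesis
    unfolding same_pattern_def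
    by (intro pred_intros_logic(3,6) pred_intros_countable_bounded(3) pred_intros_finite(3) assms(1)
        mem const borel_measurable_pred_less measurable_weight_space_component)
qed

lemma sets_weight_space_if_pattern_invariant:
  assumes "finite V" "finite T" "T \<subseteq> sets borel"
    and inv: "\<And>\<sigma> \<sigma>'. \<sigma> \<in> space (weight_space V) \<Longrightarrow> \<sigma>' \<in> space (weight_space V) \<Longrightarrow>
      same_pattern V T \<sigma> \<sigma>' \<Longrightarrow> P \<sigma> \<Longrightarrow> P \<sigma>'"
  shows "{\<sigma> \<in> space (weight_space V). P \<sigma>} \<in> sets (weight_space V)"
proof -
  let ?M = "weight_space V"
  let ?X = "{\<sigma> \<in> space ?M. P \<sigma>}"
  define pattern where
    "pattern \<sigma> = ({(v, t) \<in> V \<times> T. \<sigma> v \<in> t}, {(u, v) \<in> V \<times> V. \<sigma> u < \<sigma> v})" for \<sigma> :: "nat \<Rightarrow> real"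
  have pattern_eq: "pattern \<sigma>0 = pattern \<sigma> \<longleftrightarrow> same_pattern V T \<sigma>0 \<sigma>" for \<sigma>0 \<sigma>
    unfolding pattern_def same_pattern_def prod.inject Collect_prod_eq_iff ..
  have "?X = (\<Union>\<sigma>0\<in>?X. {\<sigma> \<in> space ?M. pattern \<sigma>0 = pattern \<sigma>})"
  proof (intro antisym subsetI)
    fix \<sigma> assume "\<sigma> \<in> ?X"
    then show "\<sigma> \<in> (\<Union>\<sigma>0\<in>?X. {\<sigma> \<in> space ?M. pattern \<sigma>0 = pattern \<sigma>})"
      by blast
  next
    fix \<sigma> assume "\<sigma> \<in> (\<Union>\<sigma>0\<in>?X. {\<sigma> \<in> space ?M. pattern \<sigma>0 = pattern \<sigma>})"
    then obtain \<sigma>0 where "\<sigma>0 \<in> ?X" "\<sigma> \<in> space ?M" "same_pattern V T \<sigma>0 \<sigma>"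
      unfolding pattern_eq by blast
    then show "\<sigma> \<in> ?X"
      using inv[of \<sigma>0 \<sigma>] by blast
  qed
  also have "\<dots> = (\<Union>S\<in>pattern ` ?X. {\<sigma> \<in> space ?M. S = pattern \<sigma>})"
    by simp
  also have "\<dots> \<in> sets ?M"
  proof (rule sets.finite_UN)
    show "finite (pattern ` ?X)"
      by (rule finite_subset[of _ "Pow (V \<times> T) \<times> Pow (V \<times> V)"]) (auto simp: pattern_def assms)
    show "{\<sigma> \<in> space ?M. S = pattern \<sigma>} \<in> sets ?M" if "S \<in> pattern ` ?X" for S
      using that pred_same_pattern[OF assms(2,3)] by (auto simp: pattern_eq pred_def)
  qed
  finally show ?thesis .
qed

definition interval_family :: "nat \<Rightarrow> nat \<Rightarrow> real set set" where
  "interval_family n r = insert {0..<1} (DeltaI n r ` {1..r} \<union> deltaI n r ` {1..<r})"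

lemma alg1_ok_same_pattern:
  assumes E: "E \<subseteq> Pow V" and same: "same_pattern V (interval_family n r) \<sigma> \<sigma>'"
  shows "alg1_ok n r V E \<sigma> c \<longleftrightarrow> alg1_ok n r V E \<sigma>' c"
proof -
  have unit: "\<sigma> v \<in> {0..<1} \<longleftrightarrow> \<sigma>' v \<in> {0..<1}" if "v \<in> V" for v
    using same that by (simp add: same_pattern_def interval_family_def)
  have Delta: "\<sigma> v \<in> DeltaI n r j \<longleftrightarrow> \<sigma>' v \<in> DeltaI n r j" if "v \<in> V" "j \<in> {1..r}" for v j
    using same that by (simp add: same_pattern_def interval_family_def)
  have delta: "\<sigma> v \<in> deltaI n r j \<longleftrightarrow> \<sigma>' v \<in> deltaI n r j" if "v \<in> V" "j \<in> {1..<r}" for v j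
    using same that by (simp add: same_pattern_def interval_family_def)
  have before: "processed_before n r \<sigma> u v \<longleftrightarrow> processed_before n r \<sigma>' u v"
    if "u \<in> V" "v \<in> V" for u v
  proof -
    have "\<sigma> u < \<sigma> v \<longleftrightarrow> \<sigma>' u < \<sigma>' v"
      using same that by (simp add: same_pattern_def)
    moreover have "\<sigma> u \<in> (\<Union>j\<in>{1..r}. DeltaI n r j) \<longleftrightarrow> \<sigma>' u \<in> (\<Union>j\<in>{1..r}. DeltaI n r j)"
      using Delta[OF that(1)] by blast
    moreover have "\<sigma> u \<in> (\<Union>j\<in>{1..<r}. deltaI n r j) \<longleftrightarrow> \<sigma>' u \<in> (\<Union>j\<in>{1..<r}. deltaI n r j)"
      using delta[OF that(1)] by blast
    ultimately show ?thesis
      unfolding processed_before_def by argo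
  qed
  have "blocked n r E \<sigma> c v i \<longleftrightarrow> blocked n r E \<sigma>' c v i" if "v \<in> V" for v i
  proof -
    have "processed_before n r \<sigma> u v \<longleftrightarrow> processed_before n r \<sigma>' u v" if "e \<in> E" "u \<in> e" for e u
      using that E before \<open>v \<in> V\<close> by blast
    then show ?thesis
      unfolding blocked_def by blast
  qed
  then show ?thesis
    unfolding alg1_ok_iff by (simp add: unit Delta delta del: atLeastLessThan_iff)
qed

lemma alg1_color_same_pattern:
  assumes "E \<subseteq> Pow V" "same_pattern V (interval_family n r) \<sigma> \<sigma>'"
  shows "alg1_color n r V E \<sigma> = alg1_color n r V E \<sigma>'"
  unfolding alg1_color_def using alg1_ok_same_pattern[OF assms] by presburger

lemma first_v_cong:
  assumes "\<And>u v. u \<in> S \<Longrightarrow> v \<in> S \<Longrightarrow> \<sigma> u < \<sigma> v \<longleftrightarrow> \<sigma>' u < \<sigma>' v"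
  shows "first_v \<sigma> S = first_v \<sigma>' S"
proof -
  have "is_arg_min \<sigma> (\<lambda>x. x \<in> S) = is_arg_min \<sigma>' (\<lambda>x. x \<in> S)"
    using assms by (auto simp: is_arg_min_def fun_eq_iff)
  then show ?thesis
    by (simp add: first_v_def arg_min_on_def arg_min_def)
qed

lemma last_v_cong:
  assumes "\<And>u v. u \<in> S \<Longrightarrow> v \<in> S \<Longrightarrow> \<sigma> u < \<sigma> v \<longleftrightarrow> \<sigma>' u < \<sigma>' v"
  shows "last_v \<sigma> S = last_v \<sigma>' S"
proof -
  have "is_arg_max \<sigma> (\<lambda>x. x \<in> S) = is_arg_max \<sigma>' (\<lambda>x. x \<in> S)"
    using assms by (auto simp: is_arg_max_def fun_eq_iff)
  then show ?thesis
    by (simp add: last_v_def arg_max_on_def arg_max_def)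
qed

section \<open>Ordered chains\<close>

lemma first_v_mem: "finite S \<Longrightarrow> S \<noteq> {} \<Longrightarrow> first_v \<sigma> S \<in> S"
  unfolding first_v_def by (rule arg_min_if_finite)

lemma first_v_le: "finite S \<Longrightarrow> u \<in> S \<Longrightarrow> \<sigma> (first_v \<sigma> S) \<le> \<sigma> u"
  unfolding first_v_def by (rule arg_min_least) auto

lemma last_v_mem_ge:
  assumes "finite S" "S \<noteq> {}"
  shows "last_v \<sigma> S \<in> S \<and> (\<forall>u\<in>S. \<sigma> u \<le> \<sigma> (last_v \<sigma> S))"
proof -
  have fin: "finite (\<sigma> ` S)" "\<sigma> ` S \<noteq> {}"
    using assms by auto
  obtain x where x: "x \<in> S" "Max (\<sigma> ` S) = \<sigma> x"
    using Max_in[OF fin] by (rule imageE)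
  then have max: "\<forall>y\<in>S. \<sigma> y \<le> \<sigma> x"
    using Max_ge[OF fin(1)] by auto
  show ?thesis
    unfolding last_v_def arg_max_on_def
    by (rule arg_maxI[where P = "\<lambda>x. x \<in> S" and f = \<sigma>, OF x(1)]) (use max in \<open>auto simp: not_less\<close>)
qed

lemma last_v_mem: "finite S \<Longrightarrow> S \<noteq> {} \<Longrightarrow> last_v \<sigma> S \<in> S"
  using last_v_mem_ge by blast

lemma last_v_ge: "finite S \<Longrightarrow> u \<in> S \<Longrightarrow> \<sigma> u \<le> \<sigma> (last_v \<sigma> S)"
  using last_v_mem_ge by blast

locale chain_setting = interval_params +
  fixes V :: "nat set" and E :: "nat set set" and k i :: nat and C :: "nat \<Rightarrow> nat set"
  assumes finite_V: "finite V" and edges_uniform: "E \<subseteq> {e. e \<subseteq> V \<and> card e = n}"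
    and k_ge_1: "1 \<le> k" and k_le_i: "k \<le> i" and i_le_r: "i \<le> r"
    and chain_edges: "\<forall>j\<in>{1..k}. C j \<in> E" and n_ge_2: "2 \<le> n"
begin

abbreviation "chain_event \<equiv> {\<sigma> \<in> space (weight_space V). ordered_chain n r V E k i C \<sigma>}"
abbreviation "color \<equiv> alg1_color n r V E"
abbreviation "a \<equiv> i - k"

lemma edges_subset_Pow: "E \<subseteq> Pow V"
  using edges_uniform by auto

lemma chain_edge:
  assumes "j \<in> {1..k}"
  shows "C j \<subseteq> V" "finite (C j)" "card (C j) = n" "C j \<noteq> {}"
proof -
  have "C j \<in> E"
    using chain_edges assms by blast
  then show "C j \<subseteq> V" "card (C j) = n"
    using edges_uniform by auto
  then show "finite (C j)" "C j \<noteq> {}"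
    using finite_V finite_subset n_ge_2 by auto
qed

lemma chain_eventD:
  assumes "\<sigma> \<in> chain_event"
  shows "\<sigma> (first_v \<sigma> (C 1)) \<in> DeltaI n r (a + 1)"
    and "\<And>j. j \<in> {1..<k} \<Longrightarrow> last_v \<sigma> (C j) = first_v \<sigma> (C (Suc j))"
    and "\<And>j. j \<in> {1..<k} \<Longrightarrow> \<sigma> (last_v \<sigma> (C j)) \<in> deltaI n r (a + j)"
    and "\<And>j u. j \<in> {1..<k} \<Longrightarrow> u \<in> C j - {last_v \<sigma> (C j)} \<Longrightarrow> color \<sigma> u = a + j"
    and "\<And>u. u \<in> C k \<Longrightarrow> color \<sigma> u = i"
  using assms unfolding ordered_chain_def by blast+

lemma ordered_chain_same_pattern:
  assumes same: "same_pattern V (interval_family n r) \<sigma> \<sigma>'" and chain: "ordered_chain n r V E k i C \<sigma>"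
  shows "ordered_chain n r V E k i C \<sigma>'"
proof -
  have member: "\<sigma>' v \<in> t" if "\<sigma> v \<in> t" "v \<in> V" "t \<in> interval_family n r" for v t
    using same that by (simp add: same_pattern_def)
  have order: "\<sigma> u < \<sigma> v \<longleftrightarrow> \<sigma>' u < \<sigma>' v" if "u \<in> C j" "v \<in> C j" "j \<in> {1..k}" for u v j
    using same that chain_edge(1) unfolding same_pattern_def by blast
  have first: "first_v \<sigma>' (C j) = first_v \<sigma> (C j)" and last: "last_v \<sigma>' (C j) = last_v \<sigma> (C j)"
    if "j \<in> {1..k}" for j
    using first_v_cong[of "C j" \<sigma> \<sigma>'] last_v_cong[of "C j" \<sigma> \<sigma>'] order that by auto
  have color: "alg1_color n r V E \<sigma>' = color \<sigma>"
    using alg1_color_same_pattern[OF edges_subset_Pow same] by simp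
  have k: "1 \<in> {1..k}" "k \<in> {1..k}"
    using k_ge_1 by auto
  have "a + 1 \<in> {1..r}"
    using k_ge_1 k_le_i i_le_r by auto
  then have "DeltaI n r (a + 1) \<in> interval_family n r"
    unfolding interval_family_def by blast
  moreover have "first_v \<sigma> (C 1) \<in> V"
    using chain_edge[OF k(1)] first_v_mem by blast
  moreover have "\<sigma> (first_v \<sigma> (C 1)) \<in> DeltaI n r (a + 1)"
    using chain unfolding ordered_chain_def by blast
  ultimately have "\<sigma>' (first_v \<sigma>' (C 1)) \<in> DeltaI n r (a + 1)"
    using member first[OF k(1)] by simp
  moreover have "\<sigma>' (last_v \<sigma>' (C j)) \<in> deltaI n r (a + j)" if j: "j \<in> {1..<k}" for j
  proof -
    have "a + j \<in> {1..<r}"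
      using j k_le_i i_le_r by auto
    then have "deltaI n r (a + j) \<in> interval_family n r"
      unfolding interval_family_def by blast
    moreover have "last_v \<sigma> (C j) \<in> V"
      using chain_edge[of j] j last_v_mem by fastforce
    moreover have "\<sigma> (last_v \<sigma> (C j)) \<in> deltaI n r (a + j)"
      using chain j unfolding ordered_chain_def by blast
    ultimately show ?thesis
      using member last[of j] j by simp
  qed
  ultimately show ?thesis
    using chain first last k unfolding ordered_chain_def color by auto
qed

lemma sets_chain_event: "chain_event \<in> sets (weight_space V)"
proof (rule sets_weight_space_if_pattern_invariant[OF finite_V])
  show "finite (interval_family n r)"
    by (simp add: interval_family_def)
  show "interval_family n r \<subseteq> sets borel"
    by (auto simp: interval_family_def DeltaI_eq deltaI_eq)
qed (rule ordered_chain_same_pattern)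

lemma chain_weight_ge_start:
  assumes "\<sigma> \<in> chain_event" "u \<in> C 1"
  shows "real a * s \<le> \<sigma> u"
proof -
  have "real a * s \<le> \<sigma> (first_v \<sigma> (C 1))"
    using chain_eventD(1)[OF assms(1)] k_le_i by (simp add: DeltaI_eq)
  also have "\<dots> \<le> \<sigma> u"
    using chain_edge(2)[of 1] k_ge_1 assms(2) by (intro first_v_le) auto
  finally show ?thesis .
qed

lemma chain_weight_ge_link:
  assumes "\<sigma> \<in> chain_event" "j \<in> {2..k}" "u \<in> C j"
  shows "\<sigma> (last_v \<sigma> (C (j - 1))) \<le> \<sigma> u"
proof -
  have "j - 1 \<in> {1..<k}" "Suc (j - 1) = j"
    using assms(2) by auto
  then have "last_v \<sigma> (C (j - 1)) = first_v \<sigma> (C j)"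
    using chain_eventD(2)[OF assms(1)] by metis
  then show ?thesis
    using chain_edge(2)[of j] assms(2,3) first_v_le by fastforce
qed

lemma chain_weight_le_last:
  assumes "j \<in> {1..k}" "u \<in> C j"
  shows "\<sigma> u \<le> \<sigma> (last_v \<sigma> (C j))"
  using chain_edge(2)[OF assms(1)] assms(2) by (rule last_v_ge)

lemma chain_link_bounds:
  assumes "\<sigma> \<in> chain_event" "j \<in> {1..<k}"
  shows "(real (a + j) - 1) * s + \<alpha> \<le> \<sigma> (last_v \<sigma> (C j))" "\<sigma> (last_v \<sigma> (C j)) < real (a + j) * s"
  using chain_eventD(3)[OF assms] by (auto simp: deltaI_eq)

text \<open>Without ties, the last vertex \<open>w\<close> of \<open>C k\<close> cannot lie in \<open>deltaI n r i\<close>: all other vertices of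
  \<open>C k\<close> have colour \<open>i\<close> and smaller weight, so Algorithm 1 would have given \<open>w\<close> colour \<open>i + 1\<close>.\<close>
lemma last_edge_below:
  assumes "\<sigma> \<in> chain_event" "inj_on \<sigma> (C k)" "u \<in> C k"
  shows "\<sigma> u < (real i - 1) * s + \<alpha>"
proof -
  have k: "k \<in> {1..k}"
    using k_ge_1 by simp
  define w where "w = last_v \<sigma> (C k)"
  have w: "w \<in> C k" "w \<in> V"
    unfolding w_def using chain_edge[OF k] last_v_mem by blast+
  have color_w: "color \<sigma> w = i"
    using chain_eventD(5)[OF assms(1) w(1)] .
  have i: "1 \<le> i"
    using k_ge_1 k_le_i by simp
  have loc: "\<sigma> w < (real i - 1) * s + \<alpha> \<or> (i < r \<and> \<sigma> w \<in> deltaI n r i)"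
    using alg1_color_location[OF finite_V edges_subset_Pow w(2) color_w i] by blast
  have "\<not> (i < r \<and> \<sigma> w \<in> deltaI n r i)"
  proof
    assume bump: "i < r \<and> \<sigma> w \<in> deltaI n r i"
    have "color \<sigma> w = i + 1"
    proof (rule alg1_color_bumped[where \<sigma> = \<sigma> and e = "C k"])
      show "finite V" "E \<subseteq> Pow V" "w \<in> V" "w \<in> C k" "\<sigma> w \<in> deltaI n r i"
        using finite_V edges_subset_Pow w bump by auto
      show "i \<in> {1..<r}" "C k \<in> E"
        using bump i chain_edges k by auto
      fix u' assume u': "u' \<in> C k - {w}"
      then have "color \<sigma> u' = i" "u' \<in> V"
        using chain_eventD(5)[OF assms(1)] chain_edge(1)[OF k] by auto
      moreover have "\<sigma> u' \<le> \<sigma> w" "\<sigma> u' \<noteq> \<sigma> w"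
        using u' chain_weight_le_last[OF k] assms(2) w(1) by (auto simp: w_def inj_on_def)
      ultimately show "color \<sigma> u' = i \<and> \<sigma> u' \<in> {0..<1} \<and> \<sigma> u' < \<sigma> w"
        using alg1_color_location[OF finite_V edges_subset_Pow, of u' \<sigma> i] i by auto
    qed
    then show False
      using chain_eventD(5)[OF assms(1) w(1)] by simp
  qed
  then show ?thesis
    using loc chain_weight_le_last[OF k assms(3), of \<sigma>] unfolding w_def by auto
qed

end

locale realized_chain = chain_setting +
  fixes \<sigma>0 :: "nat \<Rightarrow> real"
  assumes \<sigma>0_chain: "\<sigma>0 \<in> chain_event"
begin

definition link :: "nat \<Rightarrow> nat" where
  "link j = last_v \<sigma>0 (C j)"

lemma link_mem:
  assumes "j \<in> {1..<k}"
  shows "link j \<in> C j" "link j \<in> C (Suc j)"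
proof -
  have j: "j \<in> {1..k}" "Suc j \<in> {1..k}"
    using assms by auto
  show "link j \<in> C j"
    unfolding link_def using chain_edge(2,4)[OF j(1)] by (rule last_v_mem)
  show "link j \<in> C (Suc j)"
    unfolding link_def chain_eventD(2)[OF \<sigma>0_chain assms]
    using chain_edge(2,4)[OF j(2)] by (rule first_v_mem)
qed

lemma link_bounds:
  assumes "j \<in> {1..<k}"
  shows "(real (a + j) - 1) * s + \<alpha> \<le> \<sigma>0 (link j)" "\<sigma>0 (link j) < real (a + j) * s"
  unfolding link_def by (rule chain_link_bounds[OF \<sigma>0_chain assms])+

text \<open>The links lie in pairwise separated intervals \<open>deltaI n r (a + j)\<close>, and every vertex of \<open>C j\<close> has
  weight between the links \<open>j - 1\<close> and \<open>j\<close>; this forces the intersection pattern of the edges.\<close>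
lemma link_in_edge:
  assumes l: "l \<in> {1..<k}" and j: "j \<in> {1..k}" and x: "link l \<in> C j"
  shows "j = l \<or> j = Suc l"
proof -
  have "l \<le> j" if "j < k"
  proof -
    have jj: "j \<in> {1..<k}"
      using j that by auto
    have "\<sigma>0 (link l) \<le> \<sigma>0 (link j)"
      unfolding link_def[of j] by (rule chain_weight_le_last[OF j x])
    then have "(real (a + l) - 1) * s < real (a + j) * s"
      using link_bounds[OF l] link_bounds[OF jj] Delta_len_pos by linarith
    then show ?thesis
      using block_len_pos by (simp add: mult_less_cancel_right)
  qed
  moreover have "j \<le> Suc l" if "2 \<le> j"
  proof -
    have jj: "j - 1 \<in> {1..<k}" "j \<in> {2..k}"
      using j that by auto
    have "\<sigma>0 (link (j - 1)) \<le> \<sigma>0 (link l)"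
      unfolding link_def[of "j - 1"] by (rule chain_weight_ge_link[OF \<sigma>0_chain jj(2) x])
    then have "(real (a + (j - 1)) - 1) * s < real (a + l) * s"
      using link_bounds[OF jj(1)] link_bounds[OF l] Delta_len_pos by linarith
    then show ?thesis
      using block_len_pos that by (simp add: mult_less_cancel_right)
  qed
  ultimately show ?thesis
    using l j by (cases "j < k"; cases "2 \<le> j") auto
qed

lemma edges_disjoint:
  assumes "1 \<le> j" "j + 2 \<le> l" "l \<le> k"
  shows "C j \<inter> C l = {}"
proof (rule ccontr)
  assume "C j \<inter> C l \<noteq> {}"
  then obtain w where w: "w \<in> C j" "w \<in> C l"
    by blast
  have j: "j \<in> {1..<k}" "j \<in> {1..k}" and l: "l \<in> {2..k}" "l - 1 \<in> {1..<k}"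
    using assms by auto
  have "\<sigma>0 (link (l - 1)) \<le> \<sigma>0 (link j)"
    using chain_weight_ge_link[OF \<sigma>0_chain l(1) w(2)] chain_weight_le_last[OF j(2) w(1), of \<sigma>0]
    unfolding link_def by linarith
  then have "(real (a + (l - 1)) - 1) * s < real (a + j) * s"
    using link_bounds[OF l(2)] link_bounds[OF j(1)] Delta_len_pos by linarith
  then show False
    using assms block_len_pos by (simp add: mult_less_cancel_right)
qed

lemma consecutive_edges_inter:
  assumes j: "j \<in> {1..<k}"
  shows "C j \<inter> C (Suc j) = {link j}"
proof (intro equalityI subsetI)
  fix w assume w: "w \<in> C j \<inter> C (Suc j)"
  show "w \<in> {link j}"
  proof (rule ccontr)
    assume "w \<notin> {link j}"
    then have color_w: "color \<sigma>0 w = a + j"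
      using chain_eventD(4)[OF \<sigma>0_chain j, of w] w unfolding link_def by blast
    show False
    proof (cases "Suc j = k")
      case True
      then show False
        using chain_eventD(5)[OF \<sigma>0_chain, of w] w color_w k_le_i by simp
    next
      case False
      then have j': "Suc j \<in> {1..<k}" "j \<in> {1..k}"
        using j by auto
      have "\<sigma>0 w \<le> \<sigma>0 (link j)"
        unfolding link_def using chain_weight_le_last[OF j'(2)] w by blast
      also have "\<dots> < (real (a + Suc j) - 1) * s + \<alpha>"
        using link_bounds(2)[OF j] Delta_len_pos by simp
      also have "\<dots> \<le> \<sigma>0 (link (Suc j))"
        by (rule link_bounds(1)[OF j'(1)])
      finally have "w \<noteq> last_v \<sigma>0 (C (Suc j))"
        unfolding link_def by auto
      then have "color \<sigma>0 w = a + Suc j"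
        using chain_eventD(4)[OF \<sigma>0_chain j'(1), of w] w by blast
      then show False
        using color_w by simp
    qed
  qed
qed (use link_mem[OF j] in blast)

lemma inj_on_link: "inj_on link {1..<k}"
proof (rule inj_onI)
  fix l l' assume l: "l \<in> {1..<k}" "l' \<in> {1..<k}" and eq: "link l = link l'"
  have "\<sigma>0 (link l) \<in> deltaI n r (a + l)" "\<sigma>0 (link l') \<in> deltaI n r (a + l')"
    unfolding link_def using chain_eventD(3)[OF \<sigma>0_chain] l by auto
  then show "l = l'"
    using deltaI_index_unique eq by fastforce
qed

lemma link_eq:
  assumes "\<sigma> \<in> chain_event" "j \<in> {1..<k}"
  shows "last_v \<sigma> (C j) = link j"
proof -
  have "j \<in> {1..k}" "Suc j \<in> {1..k}"
    using assms(2) by auto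
  then have "last_v \<sigma> (C j) \<in> C j \<inter> C (Suc j)"
    using chain_eventD(2)[OF assms] chain_edge last_v_mem first_v_mem by (metis IntI)
  then show ?thesis
    using consecutive_edges_inter[OF assms(2)] by blast
qed

end

section \<open>Discretisation\<close>

context realized_chain
begin

definition links :: "nat set" where
  "links = link ` {1..<k}"

definition inner :: "nat \<Rightarrow> nat set" where
  "inner j = C j - links"

lemma edge_inter_links:
  assumes j: "j \<in> {1..k}"
  shows "C j \<inter> links = link ` {l \<in> {1..<k}. j = l \<or> j = Suc l}"
  unfolding links_def using link_in_edge[OF _ j] link_mem by fastforce

lemma card_link_indices:
  assumes "j \<in> {1..k}"
  shows "card {l \<in> {1..<k}. j = l \<or> j = Suc l} = of_bool (j < k) + of_bool (2 \<le> j)"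
proof -
  consider "j < k" "2 \<le> j" | "j < k" "j = 1" | "j = k" "2 \<le> j" | "j = k" "j = 1"
    using assms by fastforce
  then show ?thesis
  proof cases
    case 1
    then have "{l \<in> {1..<k}. j = l \<or> j = Suc l} = {j - 1, j}"
      by auto
    then show ?thesis
      using 1 by simp
  next
    case 2
    then have "{l \<in> {1..<k}. j = l \<or> j = Suc l} = {j}"
      by auto
    then show ?thesis
      using 2 by simp
  next
    case 3
    then have "{l \<in> {1..<k}. j = l \<or> j = Suc l} = {j - 1}"
      by auto
    then show ?thesis
      using 3 by simp
  next
    case 4
    then have "{l \<in> {1..<k}. j = l \<or> j = Suc l} = {}"
      by auto
    then show ?thesis
      using 4 by simp
  qed
qed

lemma card_inner:
  assumes j: "j \<in> {1..k}"
  shows "card (inner j) + of_bool (j < k) + of_bool (2 \<le> j) = n"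
proof -
  have "card (C j \<inter> links) = card {l \<in> {1..<k}. j = l \<or> j = Suc l}"
    unfolding edge_inter_links[OF j] by (rule card_image[OF inj_on_subset[OF inj_on_link]]) auto
  also have "\<dots> = of_bool (j < k) + of_bool (2 \<le> j)"
    by (rule card_link_indices[OF j])
  finally have links: "card (C j \<inter> links) = of_bool (j < k) + of_bool (2 \<le> j)" .
  have "card (inner j) = card (C j) - card (C j \<inter> links)"
    unfolding inner_def using chain_edge(2)[OF j] by (intro card_Diff_subset_Int) simp
  moreover have "card (C j \<inter> links) \<le> card (C j)"
    using chain_edge(2)[OF j] by (intro card_mono) auto
  ultimately show ?thesis
    using chain_edge(3)[OF j] links by linarith
qed

lemma sum_card_inner: "(\<Sum>j\<in>{1..k}. card (inner j)) + 2 * (k - 1) = n * k"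
proof -
  have "(\<Sum>j\<in>{1..k}. card (inner j) + of_bool (j < k) + of_bool (2 \<le> j)) = n * k"
    using card_inner by simp
  moreover have "{1..k} \<inter> {j. j < k} = {1..<k}" "{1..k} \<inter> {j. 2 \<le> j} = {2..k}"
    by auto
  ultimately show ?thesis
    using k_ge_1 by (simp add: sum.distrib)
qed

lemma sum_card_inner_eq: "(\<Sum>j\<in>{1..k}. card (inner j)) = (n - 2) * k + 2"
proof -
  obtain n' k' where "n = n' + 2" "k = k' + 1"
    using n_ge_2 k_ge_1 by (metis le_add_diff_inverse2)
  then have "(n - 2) * k + 2 + 2 * (k - 1) = n * k"
    by (simp add: algebra_simps)
  then show ?thesis
    using sum_card_inner by linarith
qed

lemma sum_card_inner_mult_le:
  assumes "\<And>j. j \<in> {1..k} \<Longrightarrow> y j \<le> B"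
  shows "(\<Sum>j\<in>{1..k}. real (card (inner j)) * y j) \<le> (real n - 2) * (\<Sum>j\<in>{1..k}. y j) + 2 * B"
proof -
  define e where "e j = real (card (inner j)) - (real n - 2)" for j
  have e: "0 \<le> e j" if "j \<in> {1..k}" for j
    using card_inner[OF that] unfolding e_def by (simp add: of_bool_def split: if_splits)
  have "real (\<Sum>j\<in>{1..k}. card (inner j)) = real n * real k - 2 * (real k - 1)"
    using arg_cong[OF sum_card_inner, of real] k_ge_1 by simp
  then have sum_e: "(\<Sum>j\<in>{1..k}. e j) = 2"
    unfolding e_def sum_subtractf by simp
  have "(\<Sum>j\<in>{1..k}. real (card (inner j)) * y j) = (\<Sum>j\<in>{1..k}. (real n - 2) * y j + e j * y j)"
    by (rule sum.cong) (simp_all add: e_def algebra_simps)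
  also have "\<dots> = (real n - 2) * (\<Sum>j\<in>{1..k}. y j) + (\<Sum>j\<in>{1..k}. e j * y j)"
    by (simp add: sum.distrib sum_distrib_left)
  also have "(\<Sum>j\<in>{1..k}. e j * y j) \<le> (\<Sum>j\<in>{1..k}. e j * B)"
    using e assms by (intro sum_mono mult_left_mono) auto
  also have "\<dots> = 2 * B"
    using sum_e by (simp add: sum_distrib_right[symmetric])
  finally show ?thesis
    by simp
qed

lemma inner_disjoint:
  assumes "j \<in> {1..k}" "l \<in> {1..k}" "j < l"
  shows "inner j \<inter> inner l = {}"
proof (cases "l = Suc j")
  case True
  then show ?thesis
    using consecutive_edges_inter[of j] assms by (auto simp: inner_def links_def)
next
  case False
  then show ?thesis
    using edges_disjoint[of j l] assms by (auto simp: inner_def)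
qed

lemma links_subset: "links \<subseteq> V"
  using link_mem(1) chain_edge(1) unfolding links_def by fastforce

lemma inner_subset: "j \<in> {1..k} \<Longrightarrow> inner j \<subseteq> V"
  using chain_edge(1) unfolding inner_def by blast

text \<open>A cell \<open>m\<close> records, for every link \<open>j\<close>, which of the \<open>n\<close> equal parts of \<open>deltaI n r (a + j)\<close>
  contains its weight; given the cell, the weights of the vertices of \<open>C j\<close> are confined to
  \<open>[edge_lo m j, edge_hi m j]\<close>.\<close>
definition cell_lo :: "(nat \<Rightarrow> nat) \<Rightarrow> nat \<Rightarrow> real" where
  "cell_lo m j = (real (a + j) - 1) * s + \<alpha> + real (m j) * \<beta> / real n"

definition cell_hi :: "(nat \<Rightarrow> nat) \<Rightarrow> nat \<Rightarrow> real" where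
  "cell_hi m j = cell_lo m j + \<beta> / real n"

definition edge_lo :: "(nat \<Rightarrow> nat) \<Rightarrow> nat \<Rightarrow> real" where
  "edge_lo m j = (if j = 1 then real a * s else cell_lo m (j - 1))"

definition edge_hi :: "(nat \<Rightarrow> nat) \<Rightarrow> nat \<Rightarrow> real" where
  "edge_hi m j = (if j = k then (real i - 1) * s + \<alpha> else cell_hi m j)"

definition cells :: "(nat \<Rightarrow> nat) set" where
  "cells = PiE {1..<k} (\<lambda>_. {..<n})"

definition box_range :: "(nat \<Rightarrow> nat) \<Rightarrow> nat \<Rightarrow> real set" where
  "box_range m v = {x. (\<forall>j\<in>{1..<k}. v = link j \<longrightarrow> cell_lo m j \<le> x \<and> x < cell_hi m j) \<and>
     (\<forall>j\<in>{1..k}. v \<in> C j \<longrightarrow> edge_lo m j \<le> x \<and> x \<le> edge_hi m j)}"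

definition box :: "(nat \<Rightarrow> nat) \<Rightarrow> (nat \<Rightarrow> real) set" where
  "box m = PiE V (box_range m)"

lemma cell_offset_bounds:
  assumes "m \<in> cells" "j \<in> {1..<k}"
  shows "0 \<le> real (m j) * \<beta> / real n" "real (m j) * \<beta> / real n + \<beta> / real n \<le> \<beta>"
proof -
  have "m j < n"
    using assms by (auto simp: cells_def PiE_iff)
  then have "(real (m j) + 1) * \<beta> \<le> real n * \<beta>"
    using delta_len_pos by (intro mult_right_mono) auto
  then show "real (m j) * \<beta> / real n + \<beta> / real n \<le> \<beta>"
    using n_ge_2 by (simp add: field_simps)
  show "0 \<le> real (m j) * \<beta> / real n"
    using delta_len_pos by simp
qed

lemma edge_lo_eq:
  assumes "j \<in> {1..k}"
  shows "edge_lo m j = (real (a + j) - 1) * s - (if j = 1 then 0 else \<beta> - real (m (j - 1)) * \<beta> / real n)"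
  using assms by (auto simp: edge_lo_def cell_lo_def block_len_def algebra_simps)

lemma edge_hi_eq:
  assumes "j \<in> {1..k}"
  shows "edge_hi m j = (real (a + j) - 1) * s + \<alpha> + (if j = k then 0 else real (m j) * \<beta> / real n + \<beta> / real n)"
  using assms k_le_i by (auto simp: edge_hi_def cell_hi_def cell_lo_def)

lemma edge_width_bounds:
  assumes m: "m \<in> cells" and j: "j \<in> {1..k}"
  shows "\<alpha> \<le> edge_hi m j - edge_lo m j" "edge_hi m j - edge_lo m j \<le> s + \<beta>"
proof -
  define lo where "lo = (if j = 1 then 0 else \<beta> - real (m (j - 1)) * \<beta> / real n)"
  define hi where "hi = (if j = k then 0 else real (m j) * \<beta> / real n + \<beta> / real n)"
  have nb: "0 \<le> \<beta> / real n"
    using delta_len_pos by simp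
  have "0 \<le> lo \<and> lo \<le> \<beta>"
  proof (cases "j = 1")
    case False
    then have "j - 1 \<in> {1..<k}"
      using j by auto
    from cell_offset_bounds[OF m this] show ?thesis
      using False nb by (simp add: lo_def)
  qed (use delta_len_pos in \<open>simp add: lo_def\<close>)
  moreover have "0 \<le> hi \<and> hi \<le> \<beta>"
  proof (cases "j = k")
    case False
    then have "j \<in> {1..<k}"
      using j by auto
    from cell_offset_bounds[OF m this] show ?thesis
      using False nb by (simp add: hi_def)
  qed (use delta_len_pos in \<open>simp add: hi_def\<close>)
  moreover have "edge_hi m j - edge_lo m j = \<alpha> + lo + hi"
    unfolding edge_lo_eq[OF j] edge_hi_eq[OF j] lo_def hi_def by simp
  ultimately show "\<alpha> \<le> edge_hi m j - edge_lo m j" "edge_hi m j - edge_lo m j \<le> s + \<beta>"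
    by (simp_all add: block_len_def)
qed

lemma edge_width_sum:
  "(\<Sum>j\<in>{1..k}. edge_hi m j - edge_lo m j) = real k * \<alpha> + (real k - 1) * \<beta> + (real k - 1) * \<beta> / real n"
proof -
  have hi: "(\<Sum>j\<in>{1..k}. edge_hi m j) = ((real i - 1) * s + \<alpha>) + (\<Sum>j\<in>{1..<k}. cell_hi m j)"
  proof -
    have "{1..k} = insert k {1..<k}"
      using k_ge_1 by auto
    then have "(\<Sum>j\<in>{1..k}. edge_hi m j) = edge_hi m k + (\<Sum>j\<in>{1..<k}. edge_hi m j)"
      by simp
    also have "(\<Sum>j\<in>{1..<k}. edge_hi m j) = (\<Sum>j\<in>{1..<k}. cell_hi m j)"
      by (rule sum.cong) (auto simp: edge_hi_def)
    finally show ?thesis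
      by (simp add: edge_hi_def)
  qed
  have lo: "(\<Sum>j\<in>{1..k}. edge_lo m j) = real a * s + (\<Sum>j\<in>{1..<k}. cell_lo m j)"
  proof -
    have "{1..k} = insert 1 (Suc ` {1..<k})"
      using k_ge_1 by (auto simp: image_iff)
    then have "(\<Sum>j\<in>{1..k}. edge_lo m j) = edge_lo m 1 + (\<Sum>j\<in>Suc ` {1..<k}. edge_lo m j)"
      by (simp add: image_iff del: image_Suc_atLeastLessThan)
    also have "(\<Sum>j\<in>Suc ` {1..<k}. edge_lo m j) = (\<Sum>j\<in>{1..<k}. edge_lo m (Suc j))"
      by (simp add: sum.reindex del: image_Suc_atLeastLessThan)
    finally have "(\<Sum>j\<in>{1..k}. edge_lo m j) = edge_lo m 1 + (\<Sum>j\<in>{1..<k}. edge_lo m (Suc j))" .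
    then show ?thesis
      by (simp add: edge_lo_def)
  qed
  have "(\<Sum>j\<in>{1..<k}. cell_hi m j) = (\<Sum>j\<in>{1..<k}. cell_lo m j) + (real k - 1) * (\<beta> / real n)"
    unfolding cell_hi_def sum.distrib using k_ge_1 by simp
  then have "(\<Sum>j\<in>{1..k}. edge_hi m j - edge_lo m j)
      = (real i - 1) * s + \<alpha> - real a * s + (real k - 1) * (\<beta> / real n)"
    unfolding sum_subtractf hi lo by simp
  also have "real a = real i - real k"
    using k_le_i by simp
  finally show ?thesis
    by (simp add: block_len_def algebra_simps)
qed

lemma edge_weight_bounds:
  assumes \<sigma>: "\<sigma> \<in> chain_event" "inj_on \<sigma> (C k)"
    and cell: "\<And>j. j \<in> {1..<k} \<Longrightarrow> cell_lo m j \<le> \<sigma> (link j) \<and> \<sigma> (link j) < cell_hi m j"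
    and j: "j \<in> {1..k}" and v: "v \<in> C j"
  shows "edge_lo m j \<le> \<sigma> v \<and> \<sigma> v \<le> edge_hi m j"
proof
  show "edge_lo m j \<le> \<sigma> v"
  proof (cases "j = 1")
    case True
    then show ?thesis
      using chain_weight_ge_start[OF \<sigma>(1)] v by (simp add: edge_lo_def)
  next
    case False
    then have j': "j \<in> {2..k}" "j - 1 \<in> {1..<k}"
      using j by auto
    have "cell_lo m (j - 1) \<le> \<sigma> (last_v \<sigma> (C (j - 1)))"
      using cell[OF j'(2)] link_eq[OF \<sigma>(1) j'(2)] by simp
    also have "\<dots> \<le> \<sigma> v"
      by (rule chain_weight_ge_link[OF \<sigma>(1) j'(1) v])
    finally show ?thesis
      using False by (simp add: edge_lo_def)
  qed
  show "\<sigma> v \<le> edge_hi m j"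
  proof (cases "j = k")
    case True
    then show ?thesis
      using last_edge_below[OF \<sigma>] v by (simp add: edge_hi_def less_imp_le)
  next
    case False
    then have j': "j \<in> {1..<k}"
      using j by auto
    have "\<sigma> v \<le> \<sigma> (last_v \<sigma> (C j))"
      by (rule chain_weight_le_last[OF j v])
    also have "\<dots> < cell_hi m j"
      using cell[OF j'] link_eq[OF \<sigma>(1) j'] by simp
    finally show ?thesis
      using False by (simp add: edge_hi_def)
  qed
qed

lemma chain_event_in_box:
  assumes \<sigma>: "\<sigma> \<in> chain_event" "inj_on \<sigma> (C k)"
  shows "\<exists>m\<in>cells. \<sigma> \<in> box m"
proof -
  have "\<exists>q<n. (real (a + j) - 1) * s + \<alpha> + real q * \<beta> / real n \<le> \<sigma> (link j)
      \<and> \<sigma> (link j) < (real (a + j) - 1) * s + \<alpha> + (real q + 1) * \<beta> / real n" if j: "j \<in> {1..<k}" for j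
  proof (rule grid_index)
    show "0 < \<beta>" "0 < n"
      using delta_len_pos n_ge_2 by auto
    show "(real (a + j) - 1) * s + \<alpha> \<le> \<sigma> (link j)"
      using chain_link_bounds(1)[OF \<sigma>(1) j] link_eq[OF \<sigma>(1) j] by simp
    have "\<sigma> (link j) < real (a + j) * s"
      using chain_link_bounds(2)[OF \<sigma>(1) j] link_eq[OF \<sigma>(1) j] by simp
    then show "\<sigma> (link j) < (real (a + j) - 1) * s + \<alpha> + \<beta>"
      by (simp add: block_len_def algebra_simps)
  qed
  then obtain f where f: "\<And>j. j \<in> {1..<k} \<Longrightarrow> f j < n \<and>
      (real (a + j) - 1) * s + \<alpha> + real (f j) * \<beta> / real n \<le> \<sigma> (link j) \<and>
      \<sigma> (link j) < (real (a + j) - 1) * s + \<alpha> + (real (f j) + 1) * \<beta> / real n"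
    by metis
  define m where "m = restrict f {1..<k}"
  have "m \<in> cells"
    using f by (simp add: m_def cells_def)
  have cell: "cell_lo m j \<le> \<sigma> (link j) \<and> \<sigma> (link j) < cell_hi m j" if "j \<in> {1..<k}" for j
    using f[OF that] that by (simp add: m_def cell_lo_def cell_hi_def add_divide_distrib distrib_right)
  have "\<sigma> v \<in> box_range m v" for v
    unfolding box_range_def using cell edge_weight_bounds[OF \<sigma> cell] by blast
  then have "\<sigma> \<in> box m"
    using \<sigma>(1) by (auto simp: box_def space_weight_space PiE_iff)
  with \<open>m \<in> cells\<close> show ?thesis
    by blast
qed

lemma box_range_borel: "box_range m v \<in> sets borel"
proof -
  have "Measurable.pred borel (\<lambda>x. (\<forall>j\<in>{1..<k}. v = link j \<longrightarrow> cell_lo m j \<le> x \<and> x < cell_hi m j) \<and>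
      (\<forall>j\<in>{1..k}. v \<in> C j \<longrightarrow> edge_lo m j \<le> x \<and> x \<le> edge_hi m j))"
    by measurable
  then show ?thesis
    unfolding box_range_def pred_def by simp
qed

lemma sets_box: "box m \<in> sets (weight_space V)"
  unfolding box_def weight_space_def using finite_V box_range_borel by (intro sets_PiM_I_finite) auto

lemma measure_box_range_link:
  assumes "j \<in> {1..<k}"
  shows "measure unif (box_range m (link j)) \<le> \<beta> / real n"
proof -
  have "box_range m (link j) \<subseteq> {cell_lo m j .. cell_lo m j + \<beta> / real n}"
    using assms by (auto simp: box_range_def cell_hi_def)
  then have "measure unif (box_range m (link j)) \<le> cell_lo m j + \<beta> / real n - cell_lo m j"
    using delta_len_pos by (intro measure_unif_le_length[OF box_range_borel]) auto
  then show ?thesis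
    by simp
qed

lemma measure_box_range_edge:
  assumes "m \<in> cells" "j \<in> {1..k}" "v \<in> C j"
  shows "measure unif (box_range m v) \<le> edge_hi m j - edge_lo m j"
proof -
  have "box_range m v \<subseteq> {edge_lo m j .. edge_hi m j}"
    using assms(2,3) by (auto simp: box_range_def)
  moreover have "edge_lo m j \<le> edge_hi m j"
    using edge_width_bounds(1)[OF assms(1,2)] Delta_len_pos by linarith
  ultimately show ?thesis
    by (rule measure_unif_le_length[OF box_range_borel])
qed

lemma prod_box_range_links: "(\<Prod>v\<in>links. measure unif (box_range m v)) \<le> (\<beta> / real n) ^ (k - 1)"
proof -
  have "(\<Prod>v\<in>links. measure unif (box_range m v)) = (\<Prod>j\<in>{1..<k}. measure unif (box_range m (link j)))"
    unfolding links_def by (subst prod.reindex[OF inj_on_link]) simp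
  also have "\<dots> \<le> (\<Prod>j\<in>{1..<k}. \<beta> / real n)"
    using measure_box_range_link by (intro prod_mono) auto
  finally show ?thesis
    by simp
qed

lemma prod_box_range_inner:
  assumes m: "m \<in> cells"
  shows "(\<Prod>v\<in>(\<Union>j\<in>{1..k}. inner j). measure unif (box_range m v))
    \<le> (\<Prod>j\<in>{1..k}. (edge_hi m j - edge_lo m j) ^ card (inner j))"
proof -
  have "\<forall>j\<in>{1..k}. \<forall>l\<in>{1..k}. j \<noteq> l \<longrightarrow> inner j \<inter> inner l = {}"
    using inner_disjoint by (metis Int_commute linorder_neqE_nat)
  moreover have "finite (inner j)" if "j \<in> {1..k}" for j
    using inner_subset[OF that] finite_V finite_subset by blast
  ultimately have "(\<Prod>v\<in>(\<Union>j\<in>{1..k}. inner j). measure unif (box_range m v))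
      = (\<Prod>j\<in>{1..k}. \<Prod>v\<in>inner j. measure unif (box_range m v))"
    by (intro prod.UNION_disjoint) auto
  also have "\<dots> \<le> (\<Prod>j\<in>{1..k}. \<Prod>v\<in>inner j. edge_hi m j - edge_lo m j)"
    using measure_box_range_edge[OF m] by (intro prod_mono conjI prod_nonneg) (auto simp: inner_def)
  finally show ?thesis
    by simp
qed

lemma measure_box_le:
  assumes m: "m \<in> cells"
  shows "measure (weight_space V) (box m)
    \<le> (\<beta> / real n) ^ (k - 1) * (\<Prod>j\<in>{1..k}. (edge_hi m j - edge_lo m j) ^ card (inner j))"
proof -
  define f where "f v = measure unif (box_range m v)" for v
  define U where "U = (\<Union>j\<in>{1..k}. inner j)"
  have f: "0 \<le> f v \<and> f v \<le> 1" for v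
    unfolding f_def using prob_space.prob_le_1[OF prob_space_unif] by simp
  have U: "U \<subseteq> V" "links \<inter> U = {}"
    using inner_subset unfolding U_def by (blast, auto simp: inner_def)
  have "measure (weight_space V) (box m) = prod f V"
    unfolding box_def f_def by (rule measure_weight_space_PiE[OF finite_V box_range_borel])
  also have "\<dots> \<le> prod f (links \<union> U)"
    using finite_V links_subset U f by (intro prod_le_prod_subset) auto
  also have "\<dots> = prod f links * prod f U"
    using finite_V links_subset U finite_subset by (intro prod.union_disjoint) auto
  also have "\<dots> \<le> (\<beta> / real n) ^ (k - 1) * (\<Prod>j\<in>{1..k}. (edge_hi m j - edge_lo m j) ^ card (inner j))"
    unfolding f_def U_def using prod_box_range_links prod_box_range_inner[OF m] f delta_len_pos
    by (intro mult_mono) (auto simp: f_def prod_nonneg)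
  finally show ?thesis .
qed

end

section \<open>The estimate\<close>

lemma power_le_exp_mult:
  fixes y :: real
  assumes "0 \<le> 1 + y"
  shows "(1 + y) ^ d \<le> exp (real d * y)"
proof -
  have "(1 + y) ^ d \<le> exp y ^ d"
    using assms by (intro power_mono exp_ge_add_one_self)
  then show ?thesis
    by (simp add: exp_of_nat_mult)
qed

lemma cells_bound_eq:
  fixes n k r :: nat and b x :: real
  assumes "2 \<le> n" "1 \<le> k" "0 < r"
  shows "real n ^ (k - 1) * ((b / real n) ^ (k - 1) * (x / real r ^ ((n - 2) * k + 2)))
    = (real r * b) ^ (k - 1) / real r ^ ((n - 1) * k + 1) * x"
proof -
  obtain n' k' where "n = n' + 2" "k = k' + 1"
    using assms(1,2) by (metis le_add_diff_inverse2)
  then have "(n - 1) * k + 1 = (k - 1) + ((n - 2) * k + 2)"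
    by (simp add: algebra_simps)
  then have "real r ^ ((n - 1) * k + 1) = real r ^ (k - 1) * real r ^ ((n - 2) * k + 2)"
    by (simp add: power_add)
  moreover have "real n ^ (k - 1) * (b / real n) ^ (k - 1) = b ^ (k - 1)"
    using assms(1) by (simp add: power_divide)
  ultimately show ?thesis
    using assms by (simp add: field_simps)
qed

context realized_chain
begin

lemma sum_edge_width_scaled:
  "real r * (\<Sum>j\<in>{1..k}. edge_hi m j - edge_lo m j) - real k
    = (real k - 1) * (real r * \<beta>) * (1 + 1 / real n) - real k * pp n r"
  unfolding edge_width_sum using r_ge_2 n_ge_2 by (simp add: Delta_len_def field_simps)

lemma prod_edge_width_le:
  assumes m: "m \<in> cells"
  shows "(\<Prod>j\<in>{1..k}. (edge_hi m j - edge_lo m j) ^ card (inner j))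
    \<le> exp ((real n - 2) * ((real k - 1) * (real r * \<beta>) * (1 + 1 / real n) - real k * pp n r)
        + 4 * (real r * \<beta>)) / real r ^ ((n - 2) * k + 2)"
proof -
  define w where "w j = edge_hi m j - edge_lo m j" for j
  define y where "y j = real r * w j - 1" for j
  define d where "d j = card (inner j)" for j
  have r: "0 < real r"
    using r_ge_2 by simp
  have y: "0 \<le> 1 + y j" "y j \<le> 2 * (real r * \<beta>)" if "j \<in> {1..k}" for j
  proof -
    have "real r * \<alpha> \<le> real r * w j" "real r * w j \<le> real r * (s + \<beta>)"
      using edge_width_bounds[OF m that] r unfolding w_def by simp_all
    moreover have "real r * \<alpha> = 1 - pp n r"
      using r by (simp add: Delta_len_def)
    ultimately show "0 \<le> 1 + y j" "y j \<le> 2 * (real r * \<beta>)"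
      using pp_pos pp_less_1 unfolding y_def block_len_def by (simp_all add: algebra_simps)
  qed
  have "w j ^ d j = (1 + y j) ^ d j / real r ^ d j" for j
    using r by (simp add: y_def power_mult_distrib)
  then have "(\<Prod>j\<in>{1..k}. w j ^ d j) = (\<Prod>j\<in>{1..k}. (1 + y j) ^ d j) / real r ^ (\<Sum>j\<in>{1..k}. d j)"
    by (simp add: prod_dividef power_sum)
  also have "(\<Prod>j\<in>{1..k}. (1 + y j) ^ d j) \<le> exp (\<Sum>j\<in>{1..k}. real (d j) * y j)"
    unfolding exp_sum[OF finite_atLeastAtMost] using y(1) power_le_exp_mult by (intro prod_mono) auto
  also have "(\<Sum>j\<in>{1..k}. real (d j) * y j) \<le> (real n - 2) * (\<Sum>j\<in>{1..k}. y j) + 2 * (2 * (real r * \<beta>))"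
    unfolding d_def using y(2) by (rule sum_card_inner_mult_le)
  also have "(\<Sum>j\<in>{1..k}. y j) = real r * (\<Sum>j\<in>{1..k}. w j) - real k"
    by (simp add: y_def sum_subtractf sum_distrib_left)
  finally show ?thesis
    using r unfolding w_def d_def sum_edge_width_scaled sum_card_inner_eq by (simp add: divide_right_mono)
qed

lemma measure_chain_event_bound:
  "measure (weight_space V) chain_event \<le> (real r * \<beta>) ^ (k - 1) / real r ^ ((n - 1) * k + 1)
    * exp ((real n - 2) * ((real k - 1) * (real r * \<beta>) * (1 + 1 / real n) - real k * pp n r)
        + 4 * (real r * \<beta>))"
proof -
  let ?M = "weight_space V"
  let ?x = "exp ((real n - 2) * ((real k - 1) * (real r * \<beta>) * (1 + 1 / real n) - real k * pp n r)
    + 4 * (real r * \<beta>))"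
  let ?N = "{\<sigma> \<in> space ?M. \<not> inj_on \<sigma> (C k)}"
  interpret prob_space ?M
    by (rule prob_space_weight_space)
  have N: "?N \<in> null_sets ?M"
    using weight_space_not_inj_null[OF finite_V chain_edge(1)] k_ge_1 by simp
  have boxes: "(\<Union>m\<in>cells. box m) \<in> sets ?M" "finite cells"
    using sets_box by (auto simp: cells_def finite_PiE)
  have "chain_event \<subseteq> (\<Union>m\<in>cells. box m) \<union> ?N"
    using chain_event_in_box by blast
  then have "measure ?M chain_event \<le> measure ?M ((\<Union>m\<in>cells. box m) \<union> ?N)"
    using boxes N by (intro finite_measure_mono) auto
  also have "\<dots> = measure ?M (\<Union>m\<in>cells. box m)"
    by (rule measure_Un_null_set[OF boxes(1) N])
  also have "\<dots> \<le> (\<Sum>m\<in>cells. measure ?M (box m))"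
    using boxes sets_box by (intro measure_UNION_le) auto
  also have "\<dots> \<le> (\<Sum>m\<in>cells. (\<beta> / real n) ^ (k - 1) * (?x / real r ^ ((n - 2) * k + 2)))"
  proof (rule sum_mono)
    fix m assume m: "m \<in> cells"
    have "0 \<le> (\<beta> / real n) ^ (k - 1)"
      using delta_len_pos by simp
    then show "measure ?M (box m) \<le> (\<beta> / real n) ^ (k - 1) * (?x / real r ^ ((n - 2) * k + 2))"
      using measure_box_le[OF m] prod_edge_width_le[OF m] by (meson mult_left_mono order_trans)
  qed
  also have "\<dots> = real n ^ (k - 1) * ((\<beta> / real n) ^ (k - 1) * (?x / real r ^ ((n - 2) * k + 2)))"
    by (simp add: cells_def card_PiE)
  also have "\<dots> = (real r * \<beta>) ^ (k - 1) / real r ^ ((n - 1) * k + 1) * ?x"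
    using n_ge_2 k_ge_1 r_ge_2 by (intro cells_bound_eq) auto
  finally show ?thesis .
qed

end

context chain_setting
begin

lemma measure_chain_event_le_exp:
  "measure (weight_space V) chain_event \<le> (real r * \<beta>) ^ (k - 1) / real r ^ ((n - 1) * k + 1)
    * exp ((real n - 2) * ((real k - 1) * (real r * \<beta>) * (1 + 1 / real n) - real k * pp n r)
        + 4 * (real r * \<beta>))"
proof (cases "chain_event = {}")
  case True
  show ?thesis
    unfolding True using delta_len_pos by simp
next
  case False
  then obtain \<sigma>0 where "\<sigma>0 \<in> chain_event"
    by blast
  then interpret realized_chain n r V E k i C \<sigma>0
    by unfold_locales
  show ?thesis
    by (rule measure_chain_event_bound)
qed

end

lemma ln_ratio_bounds:
  assumes "1 \<le> ln (real n)"
  shows "0 < ln (real n / ln (real n))" "ln (real n / ln (real n)) \<le> ln (real n)"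
proof -
  have n: "0 < real n"
    using assms by (cases n) auto
  then have "ln (real n) < real n"
    by (rule ln_less_self)
  then have "1 < real n / ln (real n)"
    using assms by (simp add: less_divide_eq)
  then show "0 < ln (real n / ln (real n))"
    by simp
  show "ln (real n / ln (real n)) \<le> ln (real n)"
    using n assms by (simp add: ln_div)
qed

lemma le_if_less_root5:
  fixes x y :: real
  assumes "1 \<le> x" "x < root 5 y"
  shows "x \<le> y"
proof -
  have "0 \<le> y"
  proof (rule ccontr)
    assume "\<not> 0 \<le> y"
    then have "root 5 y \<le> 0"
      by simp
    then show False
      using assms by linarith
  qed
  have "x ^ 5 < root 5 y ^ 5"
    using assms by (intro power_strict_mono) auto
  also have "\<dots> = y"
    using \<open>0 \<le> y\<close> by simp
  finally have "x ^ 5 < y" .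
  moreover have "x ^ 1 \<le> x ^ 5"
    using assms(1) by (intro power_increasing) auto
  ultimately show ?thesis
    by simp
qed

lemma eventually_large_n:
  "eventually (\<lambda>n::nat. 2 \<le> n \<and> 1 \<le> ln (real n) \<and> (ln (real n) + 6) * ln (real n) / real n \<le> 1 / 2)
     sequentially"
proof -
  have "eventually (\<lambda>n::nat. 1 \<le> ln (real n)) sequentially"
    by real_asymp
  moreover have "eventually (\<lambda>n::nat. (ln (real n) + 6) * ln (real n) / real n \<le> 1 / 2) sequentially"
    by real_asymp
  ultimately show ?thesis
    using eventually_ge_at_top[of 2] by eventually_elim auto
qed

lemma exponent_le:
  fixes n r k :: nat
  assumes k: "1 \<le> k" "k \<le> r" and r: "real r \<le> ln (real n)" and n: "1 \<le> ln (real n)"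
    and small: "(ln (real n) + 6) * ln (real n) / real n \<le> 1 / 2"
  defines "L \<equiv> ln (real n / ln (real n)) / real n"
  shows "(real n - 2) * ((real k - 1) * L * (1 + 1 / real n) - real k * ((real r - 1) / real r * L)) + 4 * L
    \<le> real n * L * (real k / real r - 1) + 1 / 2"
proof -
  define x where "x = ln (real n)"
  define c where "c = real k / real r - 1"
  have n_pos: "0 < real n" and r_pos: "0 < real r"
    using n k by (cases n, auto)
  have L: "0 < L" "L \<le> x / real n"
    using ln_ratio_bounds[OF n] n_pos unfolding L_def x_def by (auto intro: divide_right_mono)
  have c: "-1 \<le> c" "c \<le> 0"
    using k r_pos by (auto simp: c_def field_simps)
  have "(real k - 1) * L * (1 + 1 / real n) - real k * ((real r - 1) / real r * L)
      = L * ((real k - 1) - real k * ((real r - 1) / real r)) + (real k - 1) * L / real n"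
    by (simp add: algebra_simps diff_divide_distrib)
  also have "(real k - 1) - real k * ((real r - 1) / real r) = c"
    using r_pos by (simp add: c_def field_simps)
  finally have inner: "(real k - 1) * L * (1 + 1 / real n) - real k * ((real r - 1) / real r * L)
      = L * c + (real k - 1) * L / real n" .
  have "(real n - 2) * ((real k - 1) * L * (1 + 1 / real n) - real k * ((real r - 1) / real r * L)) + 4 * L
      = (real n - 2) * (L * c) + (real n - 2) * ((real k - 1) * L / real n) + 4 * L"
    unfolding inner by (simp add: distrib_left)
  also have "(real n - 2) * ((real k - 1) * L / real n) \<le> real n * ((real k - 1) * L / real n)"
    using k L by (intro mult_right_mono) auto
  also have "\<dots> = (real k - 1) * L"
    using n_pos by simp
  also have "(real n - 2) * (L * c) = real n * L * c + 2 * L * (- c)"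
    by (simp add: algebra_simps)
  also have "2 * L * (- c) \<le> 2 * L"
    using mult_left_mono[of "- c" 1 "2 * L"] L c by simp
  finally have "(real n - 2) * ((real k - 1) * L * (1 + 1 / real n) - real k * ((real r - 1) / real r * L)) + 4 * L
      \<le> real n * L * c + (real k + 5) * L"
    by (simp add: algebra_simps)
  also have "(real k + 5) * L \<le> (x + 6) * (x / real n)"
    using k r L unfolding x_def by (intro mult_mono) auto
  also have "\<dots> \<le> 1 / 2"
    using small unfolding x_def by simp
  finally show ?thesis
    unfolding c_def by simp
qed

text \<open>Since \<open>n L = ln (n / ln n)\<close>, the main term \<open>exp (n L (k / r - 1))\<close> of the exponential equals
  \<open>(ln n / n) powr (1 - k / r)\<close>.\<close>
lemma exponent_estimate:
  fixes n r k :: nat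
  assumes k: "1 \<le> k" "k \<le> r" and r: "real r \<le> ln (real n)" and n: "1 \<le> ln (real n)"
    and small: "(ln (real n) + 6) * ln (real n) / real n \<le> 1 / 2"
  defines "L \<equiv> ln (real n / ln (real n)) / real n"
  shows "L ^ (k - 1) * exp ((real n - 2) * ((real k - 1) * L * (1 + 1 / real n)
      - real k * ((real r - 1) / real r * L)) + 4 * L)
    \<le> 2 * (ln (real n) / real n) powr (real k * (real r - 1) / real r)"
proof -
  define x where "x = ln (real n)"
  define c where "c = real k / real r - 1"
  have n_pos: "0 < real n" and r_pos: "0 < real r"
    using n k by (cases n, auto)
  have L: "0 < L" "L \<le> x / real n"
    using ln_ratio_bounds[OF n] n_pos unfolding L_def x_def by (auto intro: divide_right_mono)
  have "0 < x"
    using n by (simp add: x_def)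
  then have x: "0 < x" "0 < x / real n"
    using n_pos by simp_all
  have "real n * L = - ln (x / real n)"
    using n n_pos by (simp add: L_def x_def ln_div)
  then have main: "exp (real n * L * c) = (x / real n) powr (- c)"
    using x n_pos by (simp add: powr_def)
  have "exp ((real n - 2) * ((real k - 1) * L * (1 + 1 / real n) - real k * ((real r - 1) / real r * L)) + 4 * L)
      \<le> exp (real n * L * c + 1 / 2)"
    using exponent_le[OF k r n small] unfolding L_def c_def by simp
  also have "\<dots> = (x / real n) powr (- c) * exp (1 / 2)"
    unfolding exp_add main ..
  also have "\<dots> \<le> (x / real n) powr (- c) * 2"
    using exp_half_le2 by (intro mult_left_mono) auto
  finally have E: "exp ((real n - 2) * ((real k - 1) * L * (1 + 1 / real n)
      - real k * ((real r - 1) / real r * L)) + 4 * L) \<le> (x / real n) powr (- c) * 2" .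
  have "L ^ (k - 1) \<le> (x / real n) powr real (k - 1)"
    using L x by (simp add: powr_realpow power_mono)
  with E have "L ^ (k - 1) * exp ((real n - 2) * ((real k - 1) * L * (1 + 1 / real n)
      - real k * ((real r - 1) / real r * L)) + 4 * L)
      \<le> (x / real n) powr real (k - 1) * ((x / real n) powr (- c) * 2)"
    using L by (intro mult_mono) auto
  also have "\<dots> = 2 * (x / real n) powr (real (k - 1) + - c)"
    unfolding powr_add by simp
  also have "real (k - 1) + - c = real k * (real r - 1) / real r"
    using k r_pos by (simp add: c_def field_simps)
  finally show ?thesis
    unfolding x_def .
qed

lemma r_mult_delta_len: "2 \<le> r \<Longrightarrow> real r * delta_len n r = ln (real n / ln (real n)) / real n"
  by (simp add: delta_len_def pp_def)

lemma interval_params_large: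
  assumes r: "2 \<le> r" and n: "1 \<le> ln (real n)"
    and small: "(ln (real n) + 6) * ln (real n) / real n \<le> 1 / 2"
  shows "interval_params n r"
proof
  define L where "L = ln (real n / ln (real n)) / real n"
  have n_pos: "0 < real n"
    using n by (cases n) auto
  have "7 * ln (real n) \<le> (ln (real n) + 6) * ln (real n)"
    using n by (intro mult_right_mono) auto
  then have "ln (real n) / real n < 1"
    using small n_pos by (simp add: divide_right_mono)
  moreover have "L \<le> ln (real n) / real n"
    unfolding L_def using ln_ratio_bounds(2)[OF n] n_pos by (simp add: divide_right_mono)
  moreover have L: "0 < L"
    unfolding L_def using ln_ratio_bounds(1)[OF n] n_pos by simp
  moreover have "(real r - 1) / real r * L \<le> 1 * L"
    using r L by (intro mult_right_mono) auto
  moreover have pp: "pp n r = (real r - 1) / real r * L"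
    unfolding pp_def L_def ..
  ultimately show "pp n r < 1"
    by linarith
  show "0 < pp n r"
    unfolding pp using r L by simp
qed (fact r)

lemma (in chain_setting) measure_chain_event_le:
  assumes "real r \<le> ln (real n)" "1 \<le> ln (real n)"
    and "(ln (real n) + 6) * ln (real n) / real n \<le> 1 / 2"
  shows "measure (weight_space V) chain_event
    \<le> 2 * (ln (real n) / real n) powr (real k * (real r - 1) / real r) * (1 / real r ^ ((n - 1) * k + 1))"
proof -
  have "(real r * \<beta>) ^ (k - 1) * exp ((real n - 2) * ((real k - 1) * (real r * \<beta>) * (1 + 1 / real n)
      - real k * pp n r) + 4 * (real r * \<beta>)) \<le> 2 * (ln (real n) / real n) powr (real k * (real r - 1) / real r)"
    (is "?P * exp ?X \<le> ?B")
    unfolding r_mult_delta_len[OF r_ge_2] pp_def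
    using k_ge_1 k_le_i i_le_r assms by (intro exponent_estimate) auto
  then have "?P / real r ^ ((n - 1) * k + 1) * exp ?X \<le> ?B * (1 / real r ^ ((n - 1) * k + 1))"
    by (simp add: divide_right_mono)
  then show ?thesis
    using measure_chain_event_le_exp by linarith
qed

theorem lemma2:
  shows "\<exists>N::nat. \<forall>n\<ge>N. \<forall>r::nat. 2 \<le> r \<and> real r < root 5 (ln (real n)) \<longrightarrow>
     (\<forall>(V::nat set) (E::nat set set) (k::nat) (i::nat) (C::nat \<Rightarrow> nat set).
        finite V \<and> E \<subseteq> {e. e \<subseteq> V \<and> card e = n} \<and>
        1 \<le> k \<and> k \<le> i \<and> i \<le> r \<and> (\<forall>j\<in>{1..k}. C j \<in> E) \<longrightarrow>
        {\<sigma> \<in> space (weight_space V). ordered_chain n r V E k i C \<sigma>} \<in> sets (weight_space V) \<and>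
        measure (weight_space V) {\<sigma> \<in> space (weight_space V). ordered_chain n r V E k i C \<sigma>}
          \<le> 2 * (ln (real n) / real n) powr (real k * (real r - 1) / real r)
              * (1 / real r ^ ((n - 1) * k + 1)))"
proof -
  obtain N where N: "\<And>n. N \<le> n \<Longrightarrow>
      2 \<le> n \<and> 1 \<le> ln (real n) \<and> (ln (real n) + 6) * ln (real n) / real n \<le> 1 / 2"
    using eventually_large_n unfolding eventually_sequentially by blast
  show ?thesis
  proof (intro exI[of _ N] allI impI conjI)
    fix n r k i :: nat and V :: "nat set" and E :: "nat set set" and C :: "nat \<Rightarrow> nat set"
    assume n: "N \<le> n" and r: "2 \<le> r \<and> real r < root 5 (ln (real n))"
      and H: "finite V \<and> E \<subseteq> {e. e \<subseteq> V \<and> card e = n} \<and> 1 \<le> k \<and> k \<le> i \<and> i \<le> r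
        \<and> (\<forall>j\<in>{1..k}. C j \<in> E)"
    have "interval_params n r"
      using interval_params_large[of r n] N[OF n] r by blast
    then interpret chain_setting n r V E k i C
      using N[OF n] H by (intro chain_setting.intro chain_setting_axioms.intro) auto
    show "chain_event \<in> sets (weight_space V)"
      by (rule sets_chain_event)
    show "measure (weight_space V) chain_event
        \<le> 2 * (ln (real n) / real n) powr (real k * (real r - 1) / real r) * (1 / real r ^ ((n - 1) * k + 1))"
      using N[OF n] r le_if_less_root5[of "real r"] by (intro measure_chain_event_le) auto
  qed
qed

end
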